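(* Let $n,k$ be positive integers with $k\ge 2$ and $n\ge k^3+1$, and let $\ell$ be an integer with $0\le \ell\le k-1$. Then $$\vartheta(G(n,k,\{\ell\}))\ge \frac{\binom{k}{k-\ell}}{(k-\ell)(\ell+1)}(n-k).$$
   Context: For positive integers $n>k$ and $L\subseteq\{0,1,\dots,k-1\}$, the generalized Johnson graph $G(n,k,L)$ has vertex set $\binom{[n]}{k}$ (the $k$-subsets of $[n]=\{1,\dots,n\}$), with $A,B$ adjacent if and only if $|A\cap B|\notin L$. $\vartheta(G)$ is the Lovász theta function: $\vartheta(G)=\max\langle J,B\rangle$ over real symmetric positive semidefinite $B$ indexed by $V(G)$ with $\operatorname{tr}B=1$ and $B_{ij}=0$ for every edge $ij$, $J$ the all-ones matrix. *)

theory Defs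
  imports "HOL-Analysis.Analysis"
begin

text \<open>Real symmetric matrices indexed by a finite vertex set V are represented as
  functions B :: 'v => 'v => real (entries outside V are ignored).\<close>

definition psd_on :: "'v set \<Rightarrow> ('v \<Rightarrow> 'v \<Rightarrow> real) \<Rightarrow> bool" where
  "psd_on V B \<longleftrightarrow> (\<forall>i\<in>V. \<forall>j\<in>V. B i j = B j i) \<and>
     (\<forall>x :: 'v \<Rightarrow> real. (\<Sum>i\<in>V. \<Sum>j\<in>V. x i * B i j * x j) \<ge> 0)"

definition lovasz_theta :: "'v set \<Rightarrow> ('v \<Rightarrow> 'v \<Rightarrow> bool) \<Rightarrow> real" where
  "lovasz_theta V E = Sup {(\<Sum>i\<in>V. \<Sum>j\<in>V. B i j) | B.
      psd_on V B \<and> (\<Sum>i\<in>V. B i i) = 1 \<and> (\<forall>i\<in>V. \<forall>j\<in>V. E i j \<longrightarrow> B i j = 0)}"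

definition johnson_verts :: "nat \<Rightarrow> nat \<Rightarrow> nat set set" where
  "johnson_verts n k = {A. A \<subseteq> {1..n} \<and> card A = k}"

definition gen_johnson_adj :: "nat set \<Rightarrow> nat set \<Rightarrow> nat set \<Rightarrow> bool" where
  "gen_johnson_adj L A B \<longleftrightarrow> A \<noteq> B \<and> card (A \<inter> B) \<notin> L"

end

theory Submission
  imports Defs
begin

text \<open>
  If \<open>M\<close> is the 0/1 matrix of the relation \<open>|A \<inter> B| = l\<close> on \<open>k\<close>-subsets of \<open>{1..n}\<close> and
  \<open>lam I + M\<close> is positive semidefinite, then \<open>(lam I + M) / (N lam)\<close> is feasible for the
  theta function and gives \<open>\<vartheta> \<ge> 1 + d / lam\<close>, where \<open>d = C(k,l) C(n-k,k-l)\<close> is the row sum.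
  Writing \<open>M = \<Sum>\<^sub>t (-1)^(t-l) C(t,l) W\<^sub>t\<^sup>T W\<^sub>t\<close> with the inclusion matrices \<open>W\<^sub>t\<close> of \<open>t\<close>-subsets
  versus \<open>k\<close>-subsets, and \<open>W\<^sub>t\<^sup>T W\<^sub>t = U^s D^s / (s!)^2\<close> (\<open>s = k - t\<close>) for the up and down
  operators \<open>U\<close>, \<open>D\<close>, the matrix \<open>M\<close> acts by scalars on the eigenspaces of \<open>U D\<close>, whose
  eigenvalues are \<open>(k-j)(n-k-j+1)\<close>.  The resulting eigenvalues of \<open>M\<close> are alternating sums
  whose terms decrease in \<open>t\<close> once \<open>n \<ge> k^3 + 1\<close>, which bounds each of them below by
  \<open>-lam\<close> with \<open>lam = (l+1) C(n-k-1,k-l-1)\<close>; then \<open>d / lam = C(k,l)(n-k) / ((k-l)(l+1))\<close>.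
  For \<open>l = 0\<close> the \<open>n div k\<close> disjoint blocks of \<open>k\<close> consecutive integers form an independent
  set, which already gives \<open>\<vartheta> \<ge> (n-k)/k\<close>.
\<close>

section \<open>Lower bounds for the Lovasz theta function\<close>

lemma psd_on_offdiag_le:
  assumes "finite V" "psd_on V B" "i \<in> V" "j \<in> V"
  shows "B i j + B j i \<le> B i i + B j j"
proof -
  define x :: "'a \<Rightarrow> real" where "x v = of_bool (v = i) - of_bool (v = j)" for v
  have row: "(\<Sum>b\<in>V. x a * B a b * x b) = x a * (B a i - B a j)" for a
    using assms by (simp add: x_def right_diff_distrib sum_subtractf sum_distrib_left[symmetric] mult.assoc)
  have "0 \<le> (\<Sum>a\<in>V. \<Sum>b\<in>V. x a * B a b * x b)"
    using assms(2) by (simp add: psd_on_def)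
  also have "\<dots> = B i i + B j j - B i j - B j i"
    unfolding row using assms by (simp add: x_def left_diff_distrib sum_subtractf mult.commute[of "of_bool _"])
  finally show ?thesis by simp
qed

lemma psd_on_sum_le_card:
  assumes "finite V" "psd_on V B" "(\<Sum>i\<in>V. B i i) = 1"
  shows "(\<Sum>i\<in>V. \<Sum>j\<in>V. B i j) \<le> real (card V)"
proof -
  have "2 * (\<Sum>i\<in>V. \<Sum>j\<in>V. B i j) = (\<Sum>i\<in>V. \<Sum>j\<in>V. B i j + B j i)"
    by (simp add: sum.distrib sum.swap[of "\<lambda>i j. B j i"])
  also have "\<dots> \<le> (\<Sum>i\<in>V. \<Sum>j\<in>V. B i i + B j j)"
    by (intro sum_mono psd_on_offdiag_le[OF assms(1,2)])
  also have "\<dots> = 2 * real (card V)"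
    using assms(3) by (simp add: sum.distrib sum_distrib_left[symmetric])
  finally show ?thesis by simp
qed

lemma lovasz_theta_ge:
  assumes "finite V" "psd_on V B" "(\<Sum>i\<in>V. B i i) = 1" "\<forall>i\<in>V. \<forall>j\<in>V. E i j \<longrightarrow> B i j = 0"
  shows "(\<Sum>i\<in>V. \<Sum>j\<in>V. B i j) \<le> lovasz_theta V E"
  unfolding lovasz_theta_def
proof (rule cSup_upper)
  show "(\<Sum>i\<in>V. \<Sum>j\<in>V. B i j) \<in> {(\<Sum>i\<in>V. \<Sum>j\<in>V. B i j) | B.
      psd_on V B \<and> (\<Sum>i\<in>V. B i i) = 1 \<and> (\<forall>i\<in>V. \<forall>j\<in>V. E i j \<longrightarrow> B i j = 0)}"
    using assms(2-4) by blast
  show "bdd_above {(\<Sum>i\<in>V. \<Sum>j\<in>V. B i j) | B.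
      psd_on V B \<and> (\<Sum>i\<in>V. B i i) = 1 \<and> (\<forall>i\<in>V. \<forall>j\<in>V. E i j \<longrightarrow> B i j = 0)}"
    by (rule bdd_aboveI[where M="real (card V)"]) (auto intro: psd_on_sum_le_card[OF assms(1)])
qed

lemma lovasz_theta_ge_card_independent:
  assumes fin: "finite V" and "S \<subseteq> V" "S \<noteq> {}" and indep: "\<forall>i\<in>S. \<forall>j\<in>S. \<not> E i j"
  shows "real (card S) \<le> lovasz_theta V E"
proof -
  define B where "B i j = of_bool (i \<in> S) * of_bool (j \<in> S) / real (card S)" for i j
  have S: "finite S" "card S > 0"
    using assms rev_finite_subset[OF fin] card_gt_0_iff by auto
  have restrict: "(\<Sum>i\<in>V. of_bool (i \<in> S) * f i) = (\<Sum>i\<in>S. f i)" for f :: "'a \<Rightarrow> real"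
    using fin \<open>S \<subseteq> V\<close> by (simp add: Int_absorb1)
  have "(\<Sum>i\<in>V. \<Sum>j\<in>V. x i * B i j * x j) = (\<Sum>i\<in>S. x i)^2 / real (card S)" for x
    by (simp add: B_def restrict[symmetric] power2_eq_square sum_product sum_divide_distrib
        sum_distrib_left algebra_simps)
  then have "psd_on V B"
    unfolding psd_on_def B_def by auto
  moreover have "(\<Sum>i\<in>V. B i i) = (\<Sum>i\<in>V. of_bool (i \<in> S) * (1 / real (card S)))"
    by (rule sum.cong) (auto simp: B_def)
  then have "(\<Sum>i\<in>V. B i i) = 1"
    using S assms(3) by (simp only: restrict) simp
  moreover have "\<forall>i\<in>V. \<forall>j\<in>V. E i j \<longrightarrow> B i j = 0"
    using indep by (auto simp: B_def)
  moreover have "(\<Sum>i\<in>V. \<Sum>j\<in>V. B i j) = real (card S)"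
  proof -
    have "(\<Sum>j\<in>V. B i j) = (\<Sum>j\<in>V. of_bool (j \<in> S) * (of_bool (i \<in> S) / real (card S)))" for i
      by (simp add: B_def)
    then have "(\<Sum>j\<in>V. B i j) = of_bool (i \<in> S)" for i
      using S by (simp only: restrict) simp
    then show ?thesis
      using restrict[of "\<lambda>_. 1"] by simp
  qed
  ultimately show ?thesis
    using lovasz_theta_ge[OF fin] by metis
qed

lemma lovasz_theta_ge_shifted_regular:
  fixes M :: "'a \<Rightarrow> 'a \<Rightarrow> real" and lam d :: real
  assumes fin: "finite V" and ne: "V \<noteq> {}" and lam: "lam > 0"
    and sym: "\<forall>i\<in>V. \<forall>j\<in>V. M i j = M j i"
    and diag: "\<forall>i\<in>V. M i i = 0"
    and edges: "\<forall>i\<in>V. \<forall>j\<in>V. E i j \<longrightarrow> i \<noteq> j \<and> M i j = 0"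
    and rows: "\<forall>i\<in>V. (\<Sum>j\<in>V. M i j) = d"
    and psd: "\<And>x. 0 \<le> lam * (\<Sum>i\<in>V. x i ^ 2) + (\<Sum>i\<in>V. \<Sum>j\<in>V. x i * M i j * x j)"
  shows "1 + d / lam \<le> lovasz_theta V E"
proof -
  define N where "N = real (card V)"
  have N: "N > 0"
    using fin ne by (simp add: N_def card_gt_0_iff)
  define B where "B i j = (lam * of_bool (i = j) + M i j) / (N * lam)" for i j
  have diagonal: "(\<Sum>i\<in>V. \<Sum>j\<in>V. x i * of_bool (i = j) * x j) = (\<Sum>i\<in>V. x i ^ 2)"
    for x :: "'a \<Rightarrow> real"
    using fin by (simp add: power2_eq_square of_bool_def if_distrib if_distribR cong: if_cong)
  have entry: "x i * B i j * x j = (lam * (x i * of_bool (i = j) * x j) + x i * M i j * x j) / (N * lam)"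
    for x i j
    by (simp add: B_def add_divide_distrib distrib_left distrib_right)
  have "(\<Sum>i\<in>V. \<Sum>j\<in>V. x i * B i j * x j)
      = (lam * (\<Sum>i\<in>V. x i ^ 2) + (\<Sum>i\<in>V. \<Sum>j\<in>V. x i * M i j * x j)) / (N * lam)" for x
    unfolding entry diagonal[symmetric]
    by (simp only: sum_divide_distrib[symmetric] sum.distrib sum_distrib_left)
  then have psd_B: "psd_on V B"
    unfolding psd_on_def using sym psd N lam by (auto simp: B_def)
  have "(\<Sum>i\<in>V. B i i) = (\<Sum>i\<in>V. 1 / N)"
    using diag lam by (intro sum.cong) (auto simp: B_def)
  then have trace_B: "(\<Sum>i\<in>V. B i i) = 1"
    using N by (simp add: N_def)
  have edges_B: "\<forall>i\<in>V. \<forall>j\<in>V. E i j \<longrightarrow> B i j = 0"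
    using edges by (simp add: B_def)
  have "(\<Sum>j\<in>V. B i j) = (lam + d) / (N * lam)" if "i \<in> V" for i
    using fin that rows by (simp add: B_def sum_divide_distrib[symmetric] sum.distrib)
  then have "(\<Sum>i\<in>V. \<Sum>j\<in>V. B i j) = N * ((lam + d) / (N * lam))"
    by (simp add: N_def)
  also have "\<dots> = 1 + d / lam"
    using N lam by (simp add: field_simps)
  finally have value_B: "(\<Sum>i\<in>V. \<Sum>j\<in>V. B i j) = 1 + d / lam" .
  show ?thesis
    using lovasz_theta_ge[OF fin psd_B trace_B edges_B] value_B by simp
qed

section \<open>Up and down operators on subsets of {1..n}\<close>

lemma finite_johnson_verts: "finite (johnson_verts n t)"
proof -
  have "johnson_verts n t \<subseteq> Pow {1..n}"
    by (auto simp: johnson_verts_def)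
  then show ?thesis
    by (rule finite_subset) simp
qed

lemma johnson_verts_memberD:
  assumes "T \<in> johnson_verts n t"
  shows "finite T" "T \<subseteq> {1..n}" "card T = t"
  using assms finite_subset[of T "{1..n}"] by (auto simp: johnson_verts_def)

lemma johnson_verts_insert:
  assumes "T \<in> johnson_verts n t" "u \<in> {1..n} - T"
  shows "insert u T \<in> johnson_verts n (Suc t)"
  using assms johnson_verts_memberD[OF assms(1)] by (simp add: johnson_verts_def)

lemma johnson_verts_remove:
  "T \<in> johnson_verts n (Suc t) \<Longrightarrow> v \<in> T \<Longrightarrow> T - {v} \<in> johnson_verts n t"
  by (auto simp: johnson_verts_def card_Diff_singleton)

lemma johnson_verts_exchange:
  assumes "T \<in> johnson_verts n t" "v \<in> T" "u \<in> {1..n} - (T - {v})"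
  shows "insert u (T - {v}) \<in> johnson_verts n t"
proof -
  obtain t' where t: "t = Suc t'"
    using assms(2) johnson_verts_memberD(1,3)[OF assms(1)] by (cases t) auto
  then have "T - {v} \<in> johnson_verts n t'"
    using assms(1,2) johnson_verts_remove by blast
  then show ?thesis
    using assms(3) t johnson_verts_insert by blast
qed

lemma johnson_verts_0: "johnson_verts n 0 = {{}}"
  unfolding johnson_verts_def using finite_subset[of _ "{1..n}"] by (auto simp: card_eq_0_iff)

lemma card_johnson_verts: "card (johnson_verts n k) = n choose k"
  unfolding johnson_verts_def using n_subsets[of "{1..n}" k] by simp

text \<open>A function \<open>nat set \<Rightarrow> real\<close> stands for a vector indexed by the \<open>t\<close>-subsets of \<open>{1..n}\<close>; its
  values elsewhere are irrelevant (see \<open>eq_on_level\<close> below).\<close>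

definition down_op :: "nat \<Rightarrow> (nat set \<Rightarrow> real) \<Rightarrow> nat set \<Rightarrow> real" where
  "down_op n f T = (\<Sum>u\<in>{1..n} - T. f (insert u T))"

definition up_op :: "(nat set \<Rightarrow> real) \<Rightarrow> nat set \<Rightarrow> real" where
  "up_op g A = (\<Sum>v\<in>A. g (A - {v}))"

definition up_down :: "nat \<Rightarrow> (nat set \<Rightarrow> real) \<Rightarrow> nat set \<Rightarrow> real" where
  "up_down n f = up_op (down_op n f)"

lemma up_op_zero: "up_op (\<lambda>_. 0) = (\<lambda>_. 0)"
  by (simp add: fun_eq_iff up_op_def)

lemma up_op_add: "up_op (\<lambda>A. f A + g A) = (\<lambda>T. up_op f T + up_op g T)"
  by (simp add: fun_eq_iff up_op_def sum.distrib)

lemma up_op_diff: "up_op (\<lambda>A. f A - g A) = (\<lambda>T. up_op f T - up_op g T)"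
  by (simp add: fun_eq_iff up_op_def sum_subtractf)

lemma up_op_cmult: "up_op (\<lambda>A. c * f A) = (\<lambda>T. c * up_op f T)"
  by (simp add: fun_eq_iff up_op_def sum_distrib_left)

lemma up_op_sum: "up_op (\<lambda>A. \<Sum>i\<in>I. F i A) = (\<lambda>T. \<Sum>i\<in>I. up_op (F i) T)"
  by (simp add: fun_eq_iff up_op_def sum.swap[of _ I])

lemma down_op_diff: "down_op n (\<lambda>A. f A - g A) = (\<lambda>T. down_op n f T - down_op n g T)"
  by (simp add: fun_eq_iff down_op_def sum_subtractf)

lemma down_op_cmult: "down_op n (\<lambda>A. c * f A) = (\<lambda>T. c * down_op n f T)"
  by (simp add: fun_eq_iff down_op_def sum_distrib_left)

lemma down_op_sum: "down_op n (\<lambda>A. \<Sum>i\<in>I. F i A) = (\<lambda>T. \<Sum>i\<in>I. down_op n (F i) T)"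
  by (simp add: fun_eq_iff down_op_def sum.swap[of _ I])

lemma up_down_diff: "up_down n (\<lambda>A. f A - g A) = (\<lambda>T. up_down n f T - up_down n g T)"
  by (simp add: up_down_def down_op_diff up_op_diff)

lemma up_down_cmult: "up_down n (\<lambda>A. c * f A) = (\<lambda>T. c * up_down n f T)"
  by (simp add: up_down_def down_op_cmult up_op_cmult)

lemma up_down_sum: "up_down n (\<lambda>A. \<Sum>i\<in>I. F i A) = (\<lambda>T. \<Sum>i\<in>I. up_down n (F i) T)"
  by (simp add: up_down_def down_op_sum up_op_sum)

text \<open>Both sides sum \<open>h\<close> over the exchanges \<open>insert u (T - {v})\<close>; they differ only in the
  diagonal terms, \<open>(n - t) h T\<close> and \<open>t h T\<close>.\<close>

lemma down_up_eq:
  assumes T: "T \<in> johnson_verts n t"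
  shows "down_op n (up_op h) T = up_down n h T + (real n - 2 * real t) * h T"
proof -
  note T_props = johnson_verts_memberD[OF T]
  define X where "X = (\<Sum>u\<in>{1..n} - T. \<Sum>v\<in>T. h (insert u (T - {v})))"
  have up_insert: "up_op h (insert u T) = h T + (\<Sum>v\<in>T. h (insert u (T - {v})))" if u: "u \<in> {1..n} - T" for u
  proof -
    have "up_op h (insert u T) = h (insert u T - {u}) + (\<Sum>v\<in>T. h (insert u T - {v}))"
      using u T_props by (simp add: up_op_def)
    moreover have "insert u T - {v} = insert u (T - {v})" if "v \<in> T" for v
      using that u by auto
    ultimately show ?thesis
      using u by simp
  qed
  have "down_op n (up_op h) T = (\<Sum>u\<in>{1..n} - T. h T) + X"
    unfolding down_op_def X_def sum.distrib[symmetric] by (simp add: up_insert)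
  also have "\<dots> = real (n - t) * h T + X"
    using T_props card_Diff_subset[of T "{1..n}"] by simp
  finally have down_up: "down_op n (up_op h) T = real (n - t) * h T + X" .
  have down_remove: "down_op n h (T - {v}) = h T + (\<Sum>u\<in>{1..n} - T. h (insert u (T - {v})))" if v: "v \<in> T" for v
  proof -
    have "{1..n} - (T - {v}) = insert v ({1..n} - T)"
      using v T_props by auto
    then show ?thesis
      using v by (simp add: down_op_def insert_absorb)
  qed
  have "up_down n h T = (\<Sum>v\<in>T. h T) + (\<Sum>v\<in>T. \<Sum>u\<in>{1..n} - T. h (insert u (T - {v})))"
    unfolding up_down_def up_op_def sum.distrib[symmetric] by (simp add: down_remove)
  also have "\<dots> = real t * h T + X"
    unfolding X_def using T_props by (subst sum.swap) simp
  finally have up_down: "up_down n h T = real t * h T + X" .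
  have "t \<le> n"
    using T_props card_mono[of "{1..n}" T] by simp
  then show ?thesis
    unfolding down_up up_down by (simp add: algebra_simps)
qed

section \<open>Spectral decomposition of the up-down operator\<close>

definition eq_on_level :: "nat \<Rightarrow> nat \<Rightarrow> (nat set \<Rightarrow> real) \<Rightarrow> (nat set \<Rightarrow> real) \<Rightarrow> bool" where
  "eq_on_level n t f g \<longleftrightarrow> (\<forall>T\<in>johnson_verts n t. f T = g T)"

lemma eq_on_level_refl [simp]: "eq_on_level n t f f"
  by (simp add: eq_on_level_def)

lemma eq_on_level_trans [trans]: "eq_on_level n t f g \<Longrightarrow> eq_on_level n t g h \<Longrightarrow> eq_on_level n t f h"
  by (simp add: eq_on_level_def)

lemma eq_on_levelD: "eq_on_level n t f g \<Longrightarrow> T \<in> johnson_verts n t \<Longrightarrow> f T = g T"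
  by (simp add: eq_on_level_def)

lemma eq_on_level_sum:
  "(\<And>i. i \<in> I \<Longrightarrow> eq_on_level n t (F i) (G i)) \<Longrightarrow>
   eq_on_level n t (\<lambda>A. \<Sum>i\<in>I. F i A) (\<lambda>A. \<Sum>i\<in>I. G i A)"
  by (simp add: eq_on_level_def)

lemma down_op_cong: "eq_on_level n (Suc t) f g \<Longrightarrow> eq_on_level n t (down_op n f) (down_op n g)"
  unfolding eq_on_level_def down_op_def by (auto intro!: sum.cong johnson_verts_insert)

lemma up_op_cong: "eq_on_level n t f g \<Longrightarrow> eq_on_level n (Suc t) (up_op f) (up_op g)"
  unfolding eq_on_level_def up_op_def by (auto intro!: sum.cong johnson_verts_remove)

lemma up_down_cong: "eq_on_level n t f g \<Longrightarrow> eq_on_level n t (up_down n f) (up_down n g)"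
  unfolding eq_on_level_def up_down_def up_op_def down_op_def
  by (auto intro!: sum.cong johnson_verts_exchange)

definition up_down_eigen :: "nat \<Rightarrow> nat \<Rightarrow> real \<Rightarrow> (nat set \<Rightarrow> real) \<Rightarrow> bool" where
  "up_down_eigen n t \<theta> v \<longleftrightarrow> eq_on_level n t (up_down n v) (\<lambda>A. \<theta> * v A)"

lemma up_down_eigen_cmult: "up_down_eigen n t \<theta> v \<Longrightarrow> up_down_eigen n t \<theta> (\<lambda>A. c * v A)"
  by (simp add: up_down_eigen_def eq_on_level_def up_down_cmult)

lemma down_op_eigen:
  assumes "up_down_eigen n (Suc t) \<theta> v"
  shows "up_down_eigen n t (\<theta> - (real n - 2 * real t)) (down_op n v)"
  unfolding up_down_eigen_def eq_on_level_def
proof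
  fix T assume T: "T \<in> johnson_verts n t"
  have "down_op n (up_op (down_op n v)) T = \<theta> * down_op n v T"
    using eq_on_levelD[OF down_op_cong[OF assms[unfolded up_down_eigen_def]] T]
    by (simp add: up_down_def down_op_cmult)
  then show "up_down n (down_op n v) T = (\<theta> - (real n - 2 * real t)) * down_op n v T"
    unfolding down_up_eq[OF T] by (simp add: algebra_simps)
qed

fun up_down_poly :: "nat \<Rightarrow> real list \<Rightarrow> (nat set \<Rightarrow> real) \<Rightarrow> nat set \<Rightarrow> real" where
  "up_down_poly n [] f = f"
| "up_down_poly n (\<theta> # R) f = up_down_poly n R (\<lambda>A. up_down n f A - \<theta> * f A)"

lemma up_down_poly_cong: "eq_on_level n t f g \<Longrightarrow> eq_on_level n t (up_down_poly n R f) (up_down_poly n R g)"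
proof (induction R arbitrary: f g)
  case (Cons \<theta> R)
  have "eq_on_level n t (\<lambda>A. up_down n f A - \<theta> * f A) (\<lambda>A. up_down n g A - \<theta> * g A)"
    using up_down_cong[OF Cons.prems] Cons.prems by (simp add: eq_on_level_def)
  then show ?case
    by (simp add: Cons.IH)
qed simp

lemma up_down_poly_up:
  "eq_on_level n (Suc t) (up_down_poly n (map (\<lambda>x. x + (real n - 2 * real t)) R) (up_op h))
     (up_op (up_down_poly n R h))"
proof (induction R arbitrary: h)
  case (Cons \<theta> R)
  define c where "c = real n - 2 * real t"
  define h' where "h' = (\<lambda>A. up_down n h A - \<theta> * h A)"
  have "eq_on_level n t (down_op n (up_op h)) (\<lambda>S. up_down n h S + c * h S)"
    unfolding eq_on_level_def c_def using down_up_eq by blast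
  from up_op_cong[OF this]
  have "eq_on_level n (Suc t) (\<lambda>A. up_down n (up_op h) A - (\<theta> + c) * up_op h A) (up_op h')"
    by (simp add: eq_on_level_def up_down_def h'_def up_op_add up_op_diff up_op_cmult algebra_simps)
  from up_down_poly_cong[OF this, of "map (\<lambda>x. x + c) R"] Cons.IH[of h']
  show ?case
    unfolding c_def h'_def by (auto intro: eq_on_level_trans)
qed simp

definition up_down_eigenvalue :: "nat \<Rightarrow> nat \<Rightarrow> nat \<Rightarrow> real" where
  "up_down_eigenvalue n t j = (real t - real j) * (real n - real t - real j + 1)"

definition up_down_spectrum :: "nat \<Rightarrow> nat \<Rightarrow> real list" where
  "up_down_spectrum n t = map (up_down_eigenvalue n t) (rev [0..<Suc t])"

lemma up_down_spectrum_Suc: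
  "up_down_spectrum n (Suc t) = 0 # map (\<lambda>x. x + (real n - 2 * real t)) (up_down_spectrum n t)"
  by (simp add: up_down_spectrum_def up_down_eigenvalue_def algebra_simps)

lemma set_up_down_spectrum: "set (up_down_spectrum n t) = up_down_eigenvalue n t ` {0..t}"
  unfolding up_down_spectrum_def by (simp only: set_map set_rev set_upt atLeastLessThanSuc_atLeastAtMost)

lemma distinct_up_down_spectrum:
  assumes "2 * t \<le> n"
  shows "distinct (up_down_spectrum n t)"
proof -
  have "up_down_eigenvalue n t j' < up_down_eigenvalue n t j" if "j < j'" "j' \<le> t" for j j'
  proof -
    have "(real t - real j') * (real n - real t - real j' + 1) < (real t - real j) * (real n - real t - real j' + 1)"
      using that assms by (intro mult_strict_right_mono) auto
    also have "\<dots> \<le> (real t - real j) * (real n - real t - real j + 1)"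
      using that by (intro mult_left_mono) auto
    finally show ?thesis
      by (simp add: up_down_eigenvalue_def)
  qed
  then have "inj_on (up_down_eigenvalue n t) {0..t}"
    by (metis atLeastAtMost_iff linorder_inj_onI' order.strict_iff_not)
  then show ?thesis
    unfolding up_down_spectrum_def
    by (simp only: distinct_map distinct_rev distinct_upt set_rev set_upt atLeastLessThanSuc_atLeastAtMost)
qed

lemma up_down_poly_spectrum: "eq_on_level n t (up_down_poly n (up_down_spectrum n t) g) (\<lambda>A. 0)"
proof (induction t arbitrary: g)
  case 0
  then show ?case
    by (simp add: up_down_spectrum_def up_down_eigenvalue_def eq_on_level_def johnson_verts_0
        up_down_def up_op_def)
next
  case (Suc t)
  have "eq_on_level n (Suc t) (up_down_poly n (up_down_spectrum n (Suc t)) g)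
      (up_op (up_down_poly n (up_down_spectrum n t) (down_op n g)))"
    using up_down_poly_up[of n t "up_down_spectrum n t" "down_op n g"]
    by (simp add: up_down_spectrum_Suc up_down_def)
  also have "eq_on_level n (Suc t) \<dots> (up_op (\<lambda>A. 0))"
    by (rule up_op_cong[OF Suc.IH])
  finally show ?case
    by (simp add: up_op_zero)
qed

lemma up_down_eigen_split_off:
  assumes fin: "finite S" and notin: "\<theta> \<notin> S"
    and y: "eq_on_level n k (\<lambda>A. up_down n x A - \<theta> * x A) (\<lambda>A. \<Sum>\<mu>\<in>S. Y \<mu> A)"
    and eigen: "\<forall>\<mu>\<in>S. up_down_eigen n k \<mu> (Y \<mu>)"
  shows "up_down_eigen n k \<theta> (\<lambda>A. x A - (\<Sum>\<mu>\<in>S. Y \<mu> A / (\<mu> - \<theta>)))"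
  unfolding up_down_eigen_def eq_on_level_def
proof
  fix T assume T: "T \<in> johnson_verts n k"
  have "up_down n (\<lambda>A. Y \<mu> A / (\<mu> - \<theta>)) T = \<mu> * (Y \<mu> T / (\<mu> - \<theta>))" if "\<mu> \<in> S" for \<mu>
    using eq_on_levelD[OF eigen[rule_format, OF that, unfolded up_down_eigen_def] T]
      up_down_cmult[of n "1 / (\<mu> - \<theta>)" "Y \<mu>"] by simp
  then have "up_down n (\<lambda>A. x A - (\<Sum>\<mu>\<in>S. Y \<mu> A / (\<mu> - \<theta>))) T
      = up_down n x T - (\<Sum>\<mu>\<in>S. \<mu> * (Y \<mu> T / (\<mu> - \<theta>)))"
    by (simp add: up_down_diff up_down_sum)
  also have "(\<Sum>\<mu>\<in>S. \<mu> * (Y \<mu> T / (\<mu> - \<theta>))) = (\<Sum>\<mu>\<in>S. Y \<mu> T + \<theta> * (Y \<mu> T / (\<mu> - \<theta>)))"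
  proof (rule sum.cong[OF refl])
    fix \<mu> assume "\<mu> \<in> S"
    then have "\<mu> - \<theta> \<noteq> 0"
      using notin by auto
    then show "\<mu> * (Y \<mu> T / (\<mu> - \<theta>)) = Y \<mu> T + \<theta> * (Y \<mu> T / (\<mu> - \<theta>))"
      by (simp add: field_simps)
  qed
  also have "\<dots> = up_down n x T - \<theta> * x T + \<theta> * (\<Sum>\<mu>\<in>S. Y \<mu> T / (\<mu> - \<theta>))"
    using eq_on_levelD[OF y T] by (simp add: sum.distrib sum_distrib_left)
  finally show "up_down n (\<lambda>A. x A - (\<Sum>\<mu>\<in>S. Y \<mu> A / (\<mu> - \<theta>))) T
      = \<theta> * (x T - (\<Sum>\<mu>\<in>S. Y \<mu> T / (\<mu> - \<theta>)))"
    by (simp add: algebra_simps)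
qed

lemma up_down_eigen_decomposition:
  assumes "distinct R" "eq_on_level n k (up_down_poly n R x) (\<lambda>A. 0)"
  shows "\<exists>X. eq_on_level n k x (\<lambda>A. \<Sum>\<theta>\<in>set R. X \<theta> A) \<and> (\<forall>\<theta>\<in>set R. up_down_eigen n k \<theta> (X \<theta>))"
  using assms
proof (induction R arbitrary: x)
  case Nil
  then show ?case
    by simp
next
  case (Cons \<theta> R)
  obtain Y where Y: "eq_on_level n k (\<lambda>A. up_down n x A - \<theta> * x A) (\<lambda>A. \<Sum>\<mu>\<in>set R. Y \<mu> A)"
      "\<forall>\<mu>\<in>set R. up_down_eigen n k \<mu> (Y \<mu>)"
    using Cons.IH[of "\<lambda>A. up_down n x A - \<theta> * x A"] Cons.prems by auto
  have notin: "\<theta> \<notin> set R"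
    using Cons.prems by simp
  define X where "X \<mu> = (if \<mu> = \<theta> then (\<lambda>A. x A - (\<Sum>\<mu>'\<in>set R. Y \<mu>' A / (\<mu>' - \<theta>)))
      else (\<lambda>A. Y \<mu> A / (\<mu> - \<theta>)))" for \<mu>
  have X_R: "(\<Sum>\<mu>\<in>set R. X \<mu> A) = (\<Sum>\<mu>\<in>set R. Y \<mu> A / (\<mu> - \<theta>))" for A
    using notin by (intro sum.cong) (auto simp: X_def)
  have "eq_on_level n k x (\<lambda>A. \<Sum>\<mu>\<in>set (\<theta> # R). X \<mu> A)"
    using notin by (simp add: eq_on_level_def X_R) (simp add: X_def)
  moreover have "up_down_eigen n k \<mu> (X \<mu>)" if "\<mu> \<in> set (\<theta> # R)" for \<mu>
    using that Y(2) notin up_down_eigen_split_off[OF finite_set notin Y] up_down_eigen_cmult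
    by (auto simp: X_def divide_inverse mult.commute[of _ "inverse _"])
  ultimately show ?case
    by blast
qed

definition level_inner :: "nat \<Rightarrow> nat \<Rightarrow> (nat set \<Rightarrow> real) \<Rightarrow> (nat set \<Rightarrow> real) \<Rightarrow> real" where
  "level_inner n t f g = (\<Sum>T\<in>johnson_verts n t. f T * g T)"

lemma level_inner_commute: "level_inner n t f g = level_inner n t g f"
  by (simp add: level_inner_def mult.commute)

lemma level_inner_cong:
  "eq_on_level n t f f' \<Longrightarrow> eq_on_level n t g g' \<Longrightarrow> level_inner n t f g = level_inner n t f' g'"
  by (simp add: level_inner_def eq_on_level_def)

lemma level_inner_nonneg: "0 \<le> level_inner n t f f"
  by (simp add: level_inner_def sum_nonneg)

lemma level_inner_sum_left: "level_inner n t (\<lambda>A. \<Sum>i\<in>I. F i A) g = (\<Sum>i\<in>I. level_inner n t (F i) g)"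
  by (simp add: level_inner_def sum_distrib_right sum.swap[of _ I])

lemma level_inner_sum_right: "level_inner n t f (\<lambda>A. \<Sum>i\<in>I. F i A) = (\<Sum>i\<in>I. level_inner n t f (F i))"
  by (simp add: level_inner_def sum_distrib_left sum.swap[of _ I])

lemma level_inner_cmult_right: "level_inner n t f (\<lambda>A. c * g A) = c * level_inner n t f g"
  by (simp add: level_inner_def sum_distrib_left algebra_simps)

text \<open>Both sides sum \<open>h T * g A\<close> over the flags \<open>T \<subset> A\<close> with \<open>|A - T| = 1\<close>.\<close>

lemma level_inner_up_op: "level_inner n (Suc t) (up_op h) g = level_inner n t h (down_op n g)"
proof -
  have "level_inner n (Suc t) (up_op h) g = (\<Sum>(A, v)\<in>Sigma (johnson_verts n (Suc t)) (\<lambda>A. A). h (A - {v}) * g A)"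
    by (simp add: level_inner_def up_op_def sum_distrib_right sum.Sigma finite_johnson_verts
        johnson_verts_memberD)
  also have "\<dots> = (\<Sum>(T, u)\<in>Sigma (johnson_verts n t) (\<lambda>T. {1..n} - T). h T * g (insert u T))"
  proof (rule sum.reindex_bij_witness[where i="\<lambda>(T, u). (insert u T, u)" and j="\<lambda>(A, v). (A - {v}, v)"])
    fix a assume "a \<in> Sigma (johnson_verts n (Suc t)) (\<lambda>A. A)"
    then obtain A v where a: "a = (A, v)" "A \<in> johnson_verts n (Suc t)" "v \<in> A"
      by auto
    then show "(case (case a of (A, v) \<Rightarrow> (A - {v}, v)) of (T, u) \<Rightarrow> (insert u T, u)) = a"
      by auto
    show "(case a of (A, v) \<Rightarrow> (A - {v}, v)) \<in> Sigma (johnson_verts n t) (\<lambda>T. {1..n} - T)"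
      using a johnson_verts_remove[OF a(2,3)] johnson_verts_memberD(2)[OF a(2)] by auto
    show "(case (case a of (A, v) \<Rightarrow> (A - {v}, v)) of (T, u) \<Rightarrow> h T * g (insert u T)) =
        (case a of (A, v) \<Rightarrow> h (A - {v}) * g A)"
      using a by (simp add: insert_absorb)
  next
    fix b assume "b \<in> Sigma (johnson_verts n t) (\<lambda>T. {1..n} - T)"
    then obtain T u where b: "b = (T, u)" "T \<in> johnson_verts n t" "u \<in> {1..n} - T"
      by auto
    then show "(case (case b of (T, u) \<Rightarrow> (insert u T, u)) of (A, v) \<Rightarrow> (A - {v}, v)) = b"
      by auto
    show "(case b of (T, u) \<Rightarrow> (insert u T, u)) \<in> Sigma (johnson_verts n (Suc t)) (\<lambda>A. A)"
      using b johnson_verts_insert[OF b(2,3)] by auto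
  qed
  also have "\<dots> = level_inner n t h (down_op n g)"
    by (simp add: level_inner_def down_op_def sum_distrib_left sum.Sigma finite_johnson_verts)
  finally show ?thesis .
qed

lemma level_inner_up_down_commute: "level_inner n t (up_down n f) g = level_inner n t f (up_down n g)"
proof (cases t)
  case 0
  then show ?thesis
    by (simp add: level_inner_def johnson_verts_0 up_down_def up_op_def)
next
  case (Suc t')
  then show ?thesis
    using level_inner_up_op[of n t' "down_op n f" g] level_inner_up_op[of n t' "down_op n g" f]
    by (simp add: up_down_def level_inner_commute)
qed

lemma up_down_eigen_orthogonal:
  assumes "up_down_eigen n t \<theta> f" "up_down_eigen n t \<mu> g" "\<theta> \<noteq> \<mu>"
  shows "level_inner n t f g = 0"
proof -
  have "\<theta> * level_inner n t f g = level_inner n t (up_down n f) g"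
    unfolding level_inner_cong[OF assms(1)[unfolded up_down_eigen_def] eq_on_level_refl[of n t g]]
    by (simp add: level_inner_def sum_distrib_left mult.assoc)
  also have "\<dots> = level_inner n t f (up_down n g)"
    by (rule level_inner_up_down_commute)
  also have "\<dots> = \<mu> * level_inner n t f g"
    unfolding level_inner_cong[OF eq_on_level_refl[of n t f] assms(2)[unfolded up_down_eigen_def]]
    by (rule level_inner_cmult_right)
  finally show ?thesis
    using assms(3) by simp
qed

lemma level_inner_down_pow:
  "level_inner n t ((down_op n ^^ s) f) h = level_inner n (t + s) f ((up_op ^^ s) h)"
proof (induction s arbitrary: t h)
  case (Suc s)
  have "level_inner n t ((down_op n ^^ Suc s) f) h = level_inner n (Suc t) ((down_op n ^^ s) f) (up_op h)"
    using level_inner_up_op[of n t h "(down_op n ^^ s) f"] by (simp add: level_inner_commute)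
  also have "\<dots> = level_inner n (t + Suc s) f ((up_op ^^ Suc s) h)"
    by (simp add: Suc.IH funpow_Suc_right del: funpow.simps)
  finally show ?case .
qed simp

lemma down_pow_cong: "eq_on_level n (t + s) f g \<Longrightarrow> eq_on_level n t ((down_op n ^^ s) f) ((down_op n ^^ s) g)"
proof (induction s arbitrary: t)
  case (Suc s)
  then show ?case
    using Suc.IH[of "Suc t"] by (simp add: down_op_cong)
qed simp

lemma up_pow_cong: "eq_on_level n t f g \<Longrightarrow> eq_on_level n (t + s) ((up_op ^^ s) f) ((up_op ^^ s) g)"
  by (induction s) (simp_all add: up_op_cong)

lemma down_pow_sum: "(down_op n ^^ s) (\<lambda>A. \<Sum>i\<in>I. F i A) = (\<lambda>A. \<Sum>i\<in>I. (down_op n ^^ s) (F i) A)"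
  by (induction s) (simp_all add: down_op_sum)

lemma up_pow_sum: "(up_op ^^ s) (\<lambda>A. \<Sum>i\<in>I. F i A) = (\<lambda>A. \<Sum>i\<in>I. (up_op ^^ s) (F i) A)"
  by (induction s) (simp_all add: up_op_sum)

text \<open>The scalar by which \<open>U^s D^s\<close> acts on a \<open>\<theta>\<close>-eigenfunction on level \<open>t\<close>: the down operator
  maps it to an eigenfunction on level \<open>t - 1\<close> with eigenvalue \<open>\<theta> - (n - 2t + 2)\<close>, and
  \<open>U^(s+1) D^(s+1) v = U (U^s D^s (D v))\<close>.\<close>

fun up_down_pow_factor :: "nat \<Rightarrow> nat \<Rightarrow> nat \<Rightarrow> real \<Rightarrow> real" where
  "up_down_pow_factor n 0 t \<theta> = 1"
| "up_down_pow_factor n (Suc s) t \<theta> = \<theta> * up_down_pow_factor n s (t - 1) (\<theta> - (real n - 2 * real t + 2))"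

lemma up_pow_down_pow_eigen:
  "s \<le> t \<Longrightarrow> up_down_eigen n t \<theta> v \<Longrightarrow>
   eq_on_level n t ((up_op ^^ s) ((down_op n ^^ s) v)) (\<lambda>A. up_down_pow_factor n s t \<theta> * v A)"
proof (induction s arbitrary: t \<theta> v)
  case (Suc s)
  then obtain t' where t: "t = Suc t'"
    by (cases t) auto
  define \<theta>' where "\<theta>' = \<theta> - (real n - 2 * real t')"
  have IH: "eq_on_level n t' ((up_op ^^ s) ((down_op n ^^ s) (down_op n v)))
      (\<lambda>A. up_down_pow_factor n s t' \<theta>' * down_op n v A)"
    using Suc.IH[OF _ down_op_eigen] Suc.prems t by (simp add: \<theta>'_def)
  have "(down_op n ^^ Suc s) v = (down_op n ^^ s) (down_op n v)"
    by (simp only: funpow_Suc_right o_apply)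
  then have "eq_on_level n t ((up_op ^^ Suc s) ((down_op n ^^ Suc s) v))
      (up_op (\<lambda>A. up_down_pow_factor n s t' \<theta>' * down_op n v A))"
    using up_op_cong[OF IH] by (simp add: t)
  also have "up_op (\<lambda>A. up_down_pow_factor n s t' \<theta>' * down_op n v A)
      = (\<lambda>A. up_down_pow_factor n s t' \<theta>' * up_down n v A)"
    by (simp add: up_op_cmult up_down_def)
  also have "eq_on_level n t \<dots> (\<lambda>A. up_down_pow_factor n (Suc s) t \<theta> * v A)"
    using Suc.prems(2) by (simp add: up_down_eigen_def eq_on_level_def t \<theta>'_def algebra_simps)
  finally show ?case .
qed simp

lemma up_down_pow_factor_eigenvalue:
  "j \<le> t \<Longrightarrow> t + j \<le> n \<Longrightarrow>
   up_down_pow_factor n s t (up_down_eigenvalue n t j)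
     = (fact s)^2 * real ((t - j) choose s) * real ((n - t - j + s) choose s)"
proof (induction s arbitrary: t)
  case (Suc s)
  show ?case
  proof (cases "j = t")
    case True
    then show ?thesis
      by (simp add: up_down_eigenvalue_def)
  next
    case False
    then obtain t' where t: "t = Suc t'" and "j \<le> t'"
      using Suc.prems by (cases t) auto
    define a where "a = t' - j"
    define m where "m = n - t - j"
    have a: "t - j = Suc a" and m: "n - t' - j = Suc m"
      using Suc.prems t \<open>j \<le> t'\<close> by (auto simp: a_def m_def)
    have eigenvalue: "up_down_eigenvalue n t j = real (Suc a) * real (Suc m)"
      using Suc.prems t \<open>j \<le> t'\<close> by (simp add: up_down_eigenvalue_def a_def m_def)
    have shift: "up_down_eigenvalue n (Suc t') j - (real n - 2 * real t') = up_down_eigenvalue n t' j"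
      by (simp add: up_down_eigenvalue_def algebra_simps)
    have IH: "up_down_pow_factor n s t' (up_down_eigenvalue n t' j)
        = (fact s)^2 * real (a choose s) * real ((Suc m + s) choose s)"
      using Suc.IH[of t'] Suc.prems \<open>j \<le> t'\<close> t unfolding m a_def by simp
    have "up_down_pow_factor n (Suc s) t (up_down_eigenvalue n t j)
        = up_down_eigenvalue n t j * up_down_pow_factor n s t' (up_down_eigenvalue n t' j)"
      by (simp add: t shift)
    also have "\<dots> = (fact s)^2 * (real (Suc a) * real (a choose s)) * (real (Suc m) * real ((Suc m + s) choose s))"
      unfolding IH eigenvalue by (simp only: ac_simps)
    also have "real (Suc a) * real (a choose s) = real (Suc s) * real (Suc a choose Suc s)"
      using Suc_times_binomial[of s a] by (metis of_nat_mult)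
    also have "real (Suc m) * real ((Suc m + s) choose s) = real (Suc s) * real ((Suc m + s) choose Suc s)"
      using Suc_times_binomial_add[of s m] by (metis of_nat_mult add.commute add_Suc)
    finally show ?thesis
      using a by (simp add: m_def power2_eq_square algebra_simps)
  qed
qed simp

section \<open>Inclusion and intersection forms\<close>

lemma sum_filter_of_bool:
  fixes x :: "'a \<Rightarrow> real"
  shows "finite F \<Longrightarrow> (\<Sum>A\<in>{A\<in>F. P A}. x A) = (\<Sum>A\<in>F. of_bool (P A) * x A)"
  by (rule sum.mono_neutral_cong_left) auto

lemma sum_of_bool_insert_subset:
  assumes "finite U" "A \<subseteq> U"
  shows "(\<Sum>u\<in>U - T. of_bool (insert u T \<subseteq> A)) = of_bool (T \<subseteq> A) * real (card (A - T))"
proof -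
  have "(\<Sum>u\<in>U - T. of_bool (insert u T \<subseteq> A)) = (\<Sum>u\<in>U - T. of_bool (insert u T \<subseteq> A) * (1::real))"
    by simp
  also have "\<dots> = real (card {u \<in> U - T. insert u T \<subseteq> A})"
    using assms(1) by (simp only: sum_filter_of_bool[symmetric] finite_Diff) simp
  also have "{u \<in> U - T. insert u T \<subseteq> A} = (if T \<subseteq> A then A - T else {})"
    using assms(2) by auto
  finally show ?thesis
    by simp
qed

lemma down_pow_eq_sum_supersets:
  "T \<subseteq> {1..n} \<Longrightarrow>
   (down_op n ^^ s) x T = fact s * (\<Sum>A\<in>{A\<in>johnson_verts n (card T + s). T \<subseteq> A}. x A)"
proof (induction s arbitrary: T)
  case 0
  have "A = T" if "A \<in> johnson_verts n (card T)" "T \<subseteq> A" for A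
    using that card_subset_eq[of A T] johnson_verts_memberD[OF that(1)] by simp
  then have "{A\<in>johnson_verts n (card T). T \<subseteq> A} = {T}"
    using 0 by (auto simp: johnson_verts_def)
  then show ?case
    by simp
next
  case (Suc s)
  have T: "finite T"
    using Suc.prems finite_subset by blast
  define F where "F = johnson_verts n (card T + Suc s)"
  have "(down_op n ^^ s) x (insert u T) = fact s * (\<Sum>A\<in>F. of_bool (insert u T \<subseteq> A) * x A)"
    if "u \<in> {1..n} - T" for u
    using Suc.IH[of "insert u T"] Suc.prems that T
    by (simp add: F_def sum_filter_of_bool finite_johnson_verts)
  then have "(down_op n ^^ Suc s) x T = fact s * (\<Sum>u\<in>{1..n} - T. \<Sum>A\<in>F. of_bool (insert u T \<subseteq> A) * x A)"
    by (simp add: down_op_def sum_distrib_left)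
  also have "\<dots> = fact s * (\<Sum>A\<in>F. (\<Sum>u\<in>{1..n} - T. of_bool (insert u T \<subseteq> A)) * x A)"
    by (simp only: sum.swap[of _ "{1..n} - T"] sum_distrib_right)
  also have "\<dots> = fact s * (\<Sum>A\<in>F. (real (Suc s) * of_bool (T \<subseteq> A)) * x A)"
  proof -
    have "(\<Sum>u\<in>{1..n} - T. of_bool (insert u T \<subseteq> A)) = real (Suc s) * of_bool (T \<subseteq> A)"
      if "A \<in> F" for A
    proof -
      note A_props = johnson_verts_memberD[OF that[unfolded F_def]]
      have "(\<Sum>u\<in>{1..n} - T. of_bool (insert u T \<subseteq> A)) = of_bool (T \<subseteq> A) * real (card (A - T))"
        by (rule sum_of_bool_insert_subset[OF finite_atLeastAtMost A_props(2)])
      also have "\<dots> = real (Suc s) * of_bool (T \<subseteq> A)"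
        using A_props T by (auto simp: card_Diff_subset)
      finally show ?thesis .
    qed
    then show ?thesis
      by simp
  qed
  also have "\<dots> = fact (Suc s) * (\<Sum>A\<in>F. of_bool (T \<subseteq> A) * x A)"
    by (simp add: sum_distrib_left mult_ac)
  also have "\<dots> = fact (Suc s) * (\<Sum>A\<in>{A\<in>F. T \<subseteq> A}. x A)"
    unfolding F_def sum_filter_of_bool[OF finite_johnson_verts] ..
  finally show ?case
    by (simp add: F_def)
qed

definition inclusion_form :: "nat \<Rightarrow> nat \<Rightarrow> nat \<Rightarrow> (nat set \<Rightarrow> real) \<Rightarrow> real" where
  "inclusion_form n k t x = (\<Sum>T\<in>johnson_verts n t. (\<Sum>A\<in>{A\<in>johnson_verts n k. T \<subseteq> A}. x A)^2)"

lemma inclusion_form_level_inner: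
  assumes "t \<le> k"
  shows "inclusion_form n k t x
    = level_inner n t ((down_op n ^^ (k - t)) x) ((down_op n ^^ (k - t)) x) / (fact (k - t))^2"
proof -
  have "level_inner n t ((down_op n ^^ (k - t)) x) ((down_op n ^^ (k - t)) x)
      = (\<Sum>T\<in>johnson_verts n t. (fact (k - t))^2 * (\<Sum>A\<in>{A\<in>johnson_verts n k. T \<subseteq> A}. x A)^2)"
    unfolding level_inner_def
  proof (rule sum.cong[OF refl])
    fix T assume "T \<in> johnson_verts n t"
    then have "T \<subseteq> {1..n}" "card T + (k - t) = k"
      using assms johnson_verts_memberD by auto
    then show "(down_op n ^^ (k - t)) x T * (down_op n ^^ (k - t)) x T
        = (fact (k - t))^2 * (\<Sum>A\<in>{A\<in>johnson_verts n k. T \<subseteq> A}. x A)^2"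
      using down_pow_eq_sum_supersets[of T n "k - t" x] by (simp add: power2_eq_square)
  qed
  then show ?thesis
    by (simp add: inclusion_form_def sum_distrib_left[symmetric])
qed

lemma inclusion_form_intersections:
  "inclusion_form n k t x
    = (\<Sum>A\<in>johnson_verts n k. \<Sum>B\<in>johnson_verts n k. real (card (A \<inter> B) choose t) * (x A * x B))"
proof -
  let ?V = "johnson_verts n k"
  have count: "(\<Sum>T\<in>johnson_verts n t. of_bool (T \<subseteq> A) * of_bool (T \<subseteq> B)) = real (card (A \<inter> B) choose t)"
    if "A \<in> ?V" for A B
  proof -
    have "{T\<in>johnson_verts n t. T \<subseteq> A \<inter> B} = {T. T \<subseteq> A \<inter> B \<and> card T = t}"
      using johnson_verts_memberD(2)[OF that] by (auto simp: johnson_verts_def)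
    then have card: "card {T\<in>johnson_verts n t. T \<subseteq> A \<inter> B} = card (A \<inter> B) choose t"
      using n_subsets[of "A \<inter> B" t] johnson_verts_memberD(1)[OF that] by simp
    have "(\<Sum>T\<in>johnson_verts n t. of_bool (T \<subseteq> A) * of_bool (T \<subseteq> B))
        = (\<Sum>T\<in>johnson_verts n t. of_bool (T \<subseteq> A \<inter> B) * (1::real))"
      by (simp add: of_bool_conj)
    also have "\<dots> = real (card {T\<in>johnson_verts n t. T \<subseteq> A \<inter> B})"
      by (simp only: sum_filter_of_bool[OF finite_johnson_verts, symmetric]) simp
    finally show ?thesis
      unfolding card .
  qed
  have "(\<Sum>A\<in>{A\<in>?V. T \<subseteq> A}. x A)^2
      = (\<Sum>A\<in>?V. \<Sum>B\<in>?V. of_bool (T \<subseteq> A) * of_bool (T \<subseteq> B) * (x A * x B))" for T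
    unfolding sum_filter_of_bool[OF finite_johnson_verts] power2_eq_square sum_product by (simp add: mult_ac)
  then have "inclusion_form n k t x
      = (\<Sum>T\<in>johnson_verts n t. \<Sum>A\<in>?V. \<Sum>B\<in>?V. of_bool (T \<subseteq> A) * of_bool (T \<subseteq> B) * (x A * x B))"
    by (simp add: inclusion_form_def)
  also have "\<dots> = (\<Sum>A\<in>?V. \<Sum>B\<in>?V. (\<Sum>T\<in>johnson_verts n t. of_bool (T \<subseteq> A) * of_bool (T \<subseteq> B)) * (x A * x B))"
    by (simp add: sum_distrib_right sum.swap[of _ "johnson_verts n t"])
  finally show ?thesis
    by (simp add: count)
qed

lemma alternating_binomial_sum:
  assumes "m \<le> k"
  shows "(\<Sum>t\<in>{l..k}. (-1)^(t - l) * real (t choose l) * real (m choose t)) = of_bool (m = l)"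
proof (cases "l \<le> m")
  case False
  then show ?thesis
    by (simp add: sum.neutral)
next
  case True
  have "(\<Sum>t\<in>{l..k}. (-1)^(t - l) * real (t choose l) * real (m choose t))
      = (\<Sum>t\<in>{l..m}. (-1)^(t - l) * real (t choose l) * real (m choose t))"
    by (rule sum.mono_neutral_right) (use assms in auto)
  also have "\<dots> = (\<Sum>t\<in>{l..m}. (-1)^(t - l) * real (m choose l) * real ((m - l) choose (t - l)))"
  proof (rule sum.cong[OF refl])
    fix t assume "t \<in> {l..m}"
    then have "real (t choose l) * real (m choose t) = real (m choose l) * real ((m - l) choose (t - l))"
      using choose_mult[of l t m] by (metis mult.commute of_nat_mult atLeastAtMost_iff)
    then show "(-1)^(t - l) * real (t choose l) * real (m choose t)
        = (-1)^(t - l) * real (m choose l) * real ((m - l) choose (t - l))"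
      by (simp add: mult.assoc)
  qed
  also have "\<dots> = real (m choose l) * (\<Sum>i\<le>m - l. (-1)^i * real ((m - l) choose i))"
  proof -
    have "{l..m} = {0 + l..(m - l) + l}"
      using True by simp
    then show ?thesis
      by (simp only: sum.shift_bounds_cl_nat_ivl) (simp add: sum_distrib_left atLeast0AtMost algebra_simps)
  qed
  also have "\<dots> = of_bool (m = l)"
    using True choose_alternating_sum[of "m - l", where 'a = real] by auto
  finally show ?thesis .
qed

lemma intersection_form_expansion:
  "(\<Sum>A\<in>johnson_verts n k. \<Sum>B\<in>johnson_verts n k. x A * of_bool (card (A \<inter> B) = l) * x B)
    = (\<Sum>t\<in>{l..k}. (-1)^(t - l) * real (t choose l) * inclusion_form n k t x)"
proof -
  let ?V = "johnson_verts n k"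
  have entry: "x A * of_bool (card (A \<inter> B) = l) * x B
      = (\<Sum>t\<in>{l..k}. (-1)^(t - l) * real (t choose l) * (real (card (A \<inter> B) choose t) * (x A * x B)))"
    if "A \<in> ?V" for A B
  proof -
    have "card (A \<inter> B) \<le> k"
      using johnson_verts_memberD[OF that] card_mono[of A "A \<inter> B"] by auto
    then have delta: "of_bool (card (A \<inter> B) = l)
        = (\<Sum>t\<in>{l..k}. (-1)^(t - l) * real (t choose l) * real (card (A \<inter> B) choose t))"
      by (rule alternating_binomial_sum[symmetric])
    show ?thesis
      unfolding delta by (simp add: sum_distrib_left sum_distrib_right mult_ac)
  qed
  have "(\<Sum>A\<in>?V. \<Sum>B\<in>?V. x A * of_bool (card (A \<inter> B) = l) * x B)
      = (\<Sum>A\<in>?V. \<Sum>B\<in>?V. \<Sum>t\<in>{l..k}.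
          (-1)^(t - l) * real (t choose l) * (real (card (A \<inter> B) choose t) * (x A * x B)))"
    by (intro sum.cong refl entry)
  also have "\<dots> = (\<Sum>t\<in>{l..k}. (-1)^(t - l) * real (t choose l) * inclusion_form n k t x)"
    by (simp add: inclusion_form_intersections sum_distrib_left sum.swap[of _ "{l..k}"])
  finally show ?thesis .
qed

lemma level_inner_eigen_component:
  assumes fin: "finite S" and x: "eq_on_level n k x (\<lambda>A. \<Sum>\<theta>\<in>S. X \<theta> A)"
    and eigen: "\<forall>\<theta>\<in>S. up_down_eigen n k \<theta> (X \<theta>)" and "\<mu> \<in> S"
  shows "level_inner n k x (X \<mu>) = level_inner n k (X \<mu>) (X \<mu>)"
proof -
  have "level_inner n k x (X \<mu>) = (\<Sum>\<theta>\<in>S. level_inner n k (X \<theta>) (X \<mu>))"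
    using level_inner_cong[OF x eq_on_level_refl] by (simp add: level_inner_sum_left)
  also have "\<dots> = level_inner n k (X \<mu>) (X \<mu>) + (\<Sum>\<theta>\<in>S - {\<mu>}. level_inner n k (X \<theta>) (X \<mu>))"
    by (rule sum.remove[OF fin \<open>\<mu> \<in> S\<close>])
  also have "(\<Sum>\<theta>\<in>S - {\<mu>}. level_inner n k (X \<theta>) (X \<mu>)) = 0"
    using eigen \<open>\<mu> \<in> S\<close> by (intro sum.neutral) (auto intro: up_down_eigen_orthogonal)
  finally show ?thesis
    by simp
qed

lemma level_inner_eigen_decomposition:
  assumes "finite S" and x: "eq_on_level n k x (\<lambda>A. \<Sum>\<theta>\<in>S. X \<theta> A)"
    and "\<forall>\<theta>\<in>S. up_down_eigen n k \<theta> (X \<theta>)"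
  shows "level_inner n k x x = (\<Sum>\<theta>\<in>S. level_inner n k (X \<theta>) (X \<theta>))"
  using level_inner_cong[OF eq_on_level_refl x] level_inner_eigen_component[OF assms]
  by (simp add: level_inner_sum_right)

lemma inclusion_form_spectral:
  assumes "t \<le> k" and fin: "finite S" and x: "eq_on_level n k x (\<lambda>A. \<Sum>\<theta>\<in>S. X \<theta> A)"
    and eigen: "\<forall>\<theta>\<in>S. up_down_eigen n k \<theta> (X \<theta>)"
  shows "inclusion_form n k t x
    = (\<Sum>\<theta>\<in>S. up_down_pow_factor n (k - t) k \<theta> / (fact (k - t))^2 * level_inner n k (X \<theta>) (X \<theta>))"
proof -
  define s where "s = k - t"
  have ts: "t + s = k"
    using assms(1) by (simp add: s_def)
  have "eq_on_level n t ((down_op n ^^ s) x) (\<lambda>A. \<Sum>\<theta>\<in>S. (down_op n ^^ s) (X \<theta>) A)"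
    using down_pow_cong[of n t s x "\<lambda>A. \<Sum>\<theta>\<in>S. X \<theta> A"] x ts by (simp add: down_pow_sum)
  from up_pow_cong[OF this, of s]
  have "eq_on_level n k ((up_op ^^ s) ((down_op n ^^ s) x))
      (\<lambda>A. \<Sum>\<theta>\<in>S. (up_op ^^ s) ((down_op n ^^ s) (X \<theta>)) A)"
    by (simp add: ts up_pow_sum)
  also have "eq_on_level n k \<dots> (\<lambda>A. \<Sum>\<theta>\<in>S. up_down_pow_factor n s k \<theta> * X \<theta> A)"
    using eigen ts by (intro eq_on_level_sum up_pow_down_pow_eigen) auto
  finally have UD: "eq_on_level n k ((up_op ^^ s) ((down_op n ^^ s) x))
      (\<lambda>A. \<Sum>\<theta>\<in>S. up_down_pow_factor n s k \<theta> * X \<theta> A)" .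
  have "inclusion_form n k t x = level_inner n k x ((up_op ^^ s) ((down_op n ^^ s) x)) / (fact s)^2"
    using inclusion_form_level_inner[OF assms(1)] level_inner_down_pow[of n t s x] ts
    by (simp add: s_def)
  also have "\<dots> = (\<Sum>\<theta>\<in>S. up_down_pow_factor n s k \<theta> * level_inner n k (X \<theta>) (X \<theta>)) / (fact s)^2"
    using level_inner_cong[OF eq_on_level_refl UD] level_inner_eigen_component[OF fin x eigen]
    by (simp add: level_inner_sum_right level_inner_cmult_right)
  finally show ?thesis
    by (simp add: s_def sum_divide_distrib)
qed

text \<open>\<open>intersection_eigenvalue n k l j\<close> is the eigenvalue of the matrix \<open>[|A \<inter> B| = l]\<close> on the
  eigenspace of \<open>U D\<close> for \<open>up_down_eigenvalue n k j\<close>. The summands vanish for \<open>t > k\<close>, so that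
  alternating tails of the sum may run past \<open>k\<close>.\<close>

definition intersection_eigen_summand :: "nat \<Rightarrow> nat \<Rightarrow> nat \<Rightarrow> nat \<Rightarrow> nat \<Rightarrow> nat" where
  "intersection_eigen_summand n k l j t =
     (if t \<le> k then (t choose l) * ((k - j) choose (k - t)) * ((n - t - j) choose (k - t)) else 0)"

definition intersection_eigenvalue :: "nat \<Rightarrow> nat \<Rightarrow> nat \<Rightarrow> nat \<Rightarrow> real" where
  "intersection_eigenvalue n k l j = (\<Sum>t\<in>{l..k}. (-1)^(t - l) * real (intersection_eigen_summand n k l j t))"

lemma johnson_intersection_psd:
  assumes "2 * k \<le> n" and eigenvalues: "\<forall>j\<le>k. 0 \<le> lam + intersection_eigenvalue n k l j"
  shows "0 \<le> lam * (\<Sum>A\<in>johnson_verts n k. x A ^ 2)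
    + (\<Sum>A\<in>johnson_verts n k. \<Sum>B\<in>johnson_verts n k. x A * of_bool (card (A \<inter> B) = l) * x B)"
proof -
  define S where "S = set (up_down_spectrum n k)"
  obtain X where x: "eq_on_level n k x (\<lambda>A. \<Sum>\<theta>\<in>S. X \<theta> A)"
    and eigen: "\<forall>\<theta>\<in>S. up_down_eigen n k \<theta> (X \<theta>)"
    using up_down_eigen_decomposition[OF distinct_up_down_spectrum up_down_poly_spectrum] assms(1)
    unfolding S_def by blast
  define E where "E \<theta> = (\<Sum>t\<in>{l..k}. (-1)^(t - l) * real (t choose l)
      * (up_down_pow_factor n (k - t) k \<theta> / (fact (k - t))^2))" for \<theta>
  have E: "E (up_down_eigenvalue n k j) = intersection_eigenvalue n k l j" if "j \<le> k" for j
    unfolding E_def intersection_eigenvalue_def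
  proof (rule sum.cong[OF refl])
    fix t assume "t \<in> {l..k}"
    moreover have "n - k - j + (k - t) = n - t - j"
      using \<open>t \<in> {l..k}\<close> that assms(1) by auto
    ultimately show "(-1)^(t - l) * real (t choose l) * (up_down_pow_factor n (k - t) k (up_down_eigenvalue n k j)
        / (fact (k - t))^2) = (-1)^(t - l) * real (intersection_eigen_summand n k l j t)"
      using up_down_pow_factor_eigenvalue[of j k n "k - t"] that assms(1)
      by (simp add: intersection_eigen_summand_def)
  qed
  have "(\<Sum>A\<in>johnson_verts n k. \<Sum>B\<in>johnson_verts n k. x A * of_bool (card (A \<inter> B) = l) * x B)
      = (\<Sum>\<theta>\<in>S. E \<theta> * level_inner n k (X \<theta>) (X \<theta>))"
    unfolding intersection_form_expansion E_def
    by (simp add: inclusion_form_spectral[OF _ _ x eigen] S_def sum_distrib_left sum_distrib_right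
        sum.swap[of _ "{l..k}"] mult_ac)
  moreover have "(\<Sum>A\<in>johnson_verts n k. x A ^ 2) = (\<Sum>\<theta>\<in>S. level_inner n k (X \<theta>) (X \<theta>))"
    using level_inner_eigen_decomposition[OF _ x eigen] by (simp add: S_def level_inner_def power2_eq_square)
  moreover have "0 \<le> (lam + E \<theta>) * level_inner n k (X \<theta>) (X \<theta>)" if "\<theta> \<in> S" for \<theta>
    using that eigenvalues E level_inner_nonneg by (auto simp: S_def set_up_down_spectrum)
  ultimately show ?thesis
    by (simp add: sum_distrib_left distrib_right sum.distrib[symmetric] sum_nonneg)
qed

section \<open>Eigenvalues of the intersection matrices\<close>

lemma alternating_sum_head:
  fixes a :: "nat \<Rightarrow> real"
  assumes "p \<le> q"
  shows "(\<Sum>t\<in>{p..q}. (-1)^(t - p) * a t) = a p - (\<Sum>t\<in>{Suc p..q}. (-1)^(t - Suc p) * a t)"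
proof -
  have "(\<Sum>t\<in>{Suc p..q}. (-1)^(t - p) * a t) = - (\<Sum>t\<in>{Suc p..q}. (-1)^(t - Suc p) * a t)"
    unfolding sum_negf[symmetric]
  proof (rule sum.cong[OF refl])
    fix t assume "t \<in> {Suc p..q}"
    then have "t - p = Suc (t - Suc p)"
      by auto
    then show "(-1)^(t - p) * a t = - ((-1)^(t - Suc p) * a t)"
      by simp
  qed
  then show ?thesis
    using assms by (simp add: sum.atLeast_Suc_atMost)
qed

lemma alternating_sum_rec:
  fixes a :: "nat \<Rightarrow> real"
  assumes "\<And>t. q < t \<Longrightarrow> a t = 0"
  shows "(\<Sum>t\<in>{p..q}. (-1)^(t - p) * a t) = a p - (\<Sum>t\<in>{Suc p..q}. (-1)^(t - Suc p) * a t)"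
proof (cases "p \<le> q")
  case True
  then show ?thesis
    by (rule alternating_sum_head)
next
  case False
  then show ?thesis
    using assms by simp
qed

lemma alternating_sum_antitone_bounds:
  fixes a :: "nat \<Rightarrow> real"
  assumes antitone: "\<And>t. p \<le> t \<Longrightarrow> a (Suc t) \<le> a t" and nonneg: "\<And>t. 0 \<le> a t"
  shows "0 \<le> (\<Sum>t\<in>{p..q}. (-1)^(t - p) * a t) \<and> (\<Sum>t\<in>{p..q}. (-1)^(t - p) * a t) \<le> a p"
  using antitone
proof (induction "Suc q - p" arbitrary: p)
  case 0
  then show ?case
    using nonneg by simp
next
  case (Suc m)
  then show ?case
    using alternating_sum_head[of p q a] Suc.hyps(1)[of "Suc p"] Suc.prems[of p] by fastforce
qed

lemma binomial_le_shift:
  "d \<le> m \<Longrightarrow> 1 \<le> r \<Longrightarrow> m choose r \<le> ((m - d) choose r) + d * ((m - 1) choose (r - 1))"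
proof (induction d)
  case (Suc d)
  define q where "q = m - Suc d"
  obtain r' where r: "r = Suc r'"
    using Suc.prems by (cases r) auto
  have "m - d = Suc q"
    using Suc.prems by (simp add: q_def)
  then have "(m - d) choose r = (q choose r) + (q choose (r - 1))"
    by (simp add: r)
  moreover have "q choose (r - 1) \<le> (m - 1) choose (r - 1)"
    by (rule binomial_right_mono) (simp add: q_def)
  ultimately show ?case
    using Suc by (simp add: q_def)
qed simp

lemma intersection_eigen_summand_step:
  assumes "t < k" "j \<le> t" "l \<le> t"
  shows "intersection_eigen_summand n k l j (Suc t) * ((Suc t - l) * Suc (t - j) * (n - t - j))
    = intersection_eigen_summand n k l j t * (Suc t * (k - t)^2)"
proof -
  define a a' b b' c c' where "a = t choose l" and "a' = Suc t choose l"
    and "b = (k - j) choose (k - t)" and "b' = (k - j) choose (k - Suc t)"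
    and "c = (n - t - j) choose (k - t)" and "c' = (n - Suc t - j) choose (k - Suc t)"
  have a: "(Suc t - l) * a' = Suc t * a"
    using binomial_absorb_comp[of "Suc t" l] by (simp add: a_def a'_def)
  have b: "Suc (t - j) * b' = (k - t) * b"
  proof -
    have e: "Suc (k - Suc t + (t - j)) = k - j" "Suc (k - Suc t) = k - t"
      using assms by auto
    have "(k - t) * b = Suc (t - j) * b'"
      using Suc_times_binomial_add[of "k - Suc t" "t - j"] unfolding e b_def b'_def .
    then show ?thesis
      by (rule sym)
  qed
  have c: "(n - t - j) * c' = (k - t) * c"
  proof -
    have "(k - t) * c = (n - t - j) * ((n - t - j - 1) choose (k - t - 1))"
      unfolding c_def using assms by (intro times_binomial_minus1_eq) simp
    moreover have "n - t - j - 1 = n - Suc t - j" "k - t - 1 = k - Suc t"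
      by auto
    ultimately show ?thesis
      by (simp add: c'_def)
  qed
  have "(a' * b' * c') * ((Suc t - l) * Suc (t - j) * (n - t - j))
      = ((Suc t - l) * a') * (Suc (t - j) * b') * ((n - t - j) * c')"
    by (simp only: mult_ac)
  also have "\<dots> = (a * b * c) * (Suc t * (k - t)^2)"
    unfolding a b c power2_eq_square by (simp only: mult_ac)
  finally show ?thesis
    using assms by (simp add: intersection_eigen_summand_def a_def a'_def b_def b'_def c_def c'_def)
qed

lemma Suc_mult_square_le_cube:
  fixes t k :: nat
  assumes "t < k" "2 \<le> k"
  shows "Suc t * (k - t)^2 + 2 * t \<le> k^3 + 1"
proof (cases "t = 0")
  case True
  have "k^2 \<le> k^3"
    using assms by (simp add: power_increasing)
  then show ?thesis
    using True by simp
next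
  case False
  obtain q where q: "k = Suc (Suc q)"
    using assms(2) by (metis add_2_eq_Suc le_Suc_ex)
  have "Suc t * (k - t)^2 \<le> k * (k - 1)^2"
    using assms False by (intro mult_mono power_mono) auto
  moreover have "k * (k - 1)^2 + 2 * k \<le> k^3 + 1"
    unfolding q by (simp add: power2_eq_square power3_eq_cube algebra_simps)
  ultimately show ?thesis
    using assms by linarith
qed

text \<open>This is where \<open>n \<ge> k^3 + 1\<close> enters: by the step identity, consecutive summands have ratio at
  most \<open>(t + 1)(k - t)^2 / (n - t - j) \<le> 1\<close>.\<close>

lemma intersection_eigen_summand_antitone:
  assumes "2 \<le> k" "k^3 + 1 \<le> n" "l \<le> t" "j \<le> t"
  shows "intersection_eigen_summand n k l j (Suc t) \<le> intersection_eigen_summand n k l j t"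
proof (cases "t < k")
  case False
  then show ?thesis
    by (simp add: intersection_eigen_summand_def)
next
  case True
  define P where "P = (Suc t - l) * Suc (t - j) * (n - t - j)"
  have "Suc t * (k - t)^2 + t + j \<le> n"
    using Suc_mult_square_le_cube[OF True assms(1)] assms(2,4) by linarith
  then have "Suc t * (k - t)^2 \<le> n - t - j"
    by linarith
  also have "n - t - j \<le> P"
  proof -
    have "1 \<le> (Suc t - l) * Suc (t - j)"
      using assms(3) by simp
    from mult_le_mono1[OF this, of "n - t - j"] show ?thesis
      by (simp only: P_def mult_1)
  qed
  finally have le_P: "Suc t * (k - t)^2 \<le> P" .
  have "0 < Suc t * (k - t)^2"
    using True by simp
  with le_P have "0 < P"
    by linarith
  have "intersection_eigen_summand n k l j (Suc t) * P
      = intersection_eigen_summand n k l j t * (Suc t * (k - t)^2)"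
    unfolding P_def by (rule intersection_eigen_summand_step[OF True assms(4,3)])
  also have "\<dots> \<le> intersection_eigen_summand n k l j t * P"
    using le_P by (rule mult_le_mono2)
  finally show ?thesis
    using \<open>0 < P\<close> by simp
qed

text \<open>For \<open>j = l + 1\<close> the first summand alone may exceed \<open>lam = (l+1) C(n-k-1,k-l-1)\<close>, so the
  first three summands of the alternating sum are estimated together.\<close>

lemma three_term_polynomial_ineq:
  fixes L R M :: real
  assumes L: "1 \<le> L" and R: "L + 1 \<le> R" and M: "2 * L * R^2 \<le> M"
  shows "12 * (L + 1) * (R - L) * M + (L + 3) * (L + 2) * (L + 1) * R * (R - 1)^2
    \<le> 6 * (L + 2) * (L + 1) * R * M"
proof -
  have R1: "1 \<le> R"
    using L R by simp
  have A: "(L + 3) * (L + 2) \<le> 12 * L^2"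
  proof -
    have "0 \<le> (L - 1) * (11 * L + 6)"
      using L by simp
    then show ?thesis
      by (simp add: power2_eq_square algebra_simps)
  qed
  have B: "R * (R - 1)^2 \<le> R^2 * (R + 2)"
  proof -
    have "0 \<le> R * (4 * R - 1)"
      using R1 by simp
    then show ?thesis
      by (simp add: power2_eq_square algebra_simps)
  qed
  have "(L + 3) * (L + 2) * (R * (R - 1)^2) \<le> 12 * L^2 * (R^2 * (R + 2))"
    by (rule mult_mono[OF A B]) (use R1 in auto)
  also have "\<dots> = 6 * L * (R + 2) * (2 * L * R^2)"
    by (simp add: power2_eq_square algebra_simps)
  also have "\<dots> \<le> 6 * L * (R + 2) * M"
    by (rule mult_left_mono[OF M]) (use L R1 in simp)
  finally have "(L + 1) * ((L + 3) * (L + 2) * (R * (R - 1)^2)) \<le> (L + 1) * (6 * L * (R + 2) * M)"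
    by (rule mult_left_mono) (use L in simp)
  then show ?thesis
    by (simp add: algebra_simps)
qed

lemma real_choose_two: "real (m choose 2) = real m * (real m - 1) / 2"
proof (cases m)
  case (Suc m')
  have "2 * (Suc m' choose 2) = Suc m' * m'"
    using Suc_times_binomial[of 1 m'] by (simp add: numeral_2_eq_2)
  then have "2 * real (Suc m' choose 2) = real (Suc m') * real m'"
    by (metis of_nat_mult of_nat_numeral)
  then show ?thesis
    using Suc by (simp add: field_simps)
qed simp

lemma real_choose_three: "real (m choose 3) = real m * (real m - 1) * (real m - 2) / 6"
proof (cases m)
  case (Suc m')
  have "3 * (Suc m' choose 3) = Suc m' * (m' choose 2)"
    using Suc_times_binomial[of 2 m'] by (simp add: numeral_3_eq_3 numeral_2_eq_2)
  then have "3 * real (Suc m' choose 3) = real (Suc m') * real (m' choose 2)"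
    by (metis of_nat_mult of_nat_numeral)
  then show ?thesis
    using Suc by (simp add: real_choose_two field_simps)
qed simp

lemma three_term_binomial_ineq:
  fixes l r m X Y :: nat
  assumes l: "1 \<le> l" and lr: "l < r" and m: "2 * l * r^2 + 1 \<le> m" and XY: "(r - 1) * X = (m - 1) * Y"
  shows "(l + 1) * (r - l) * X + ((l + 3) choose 3) * (r choose 2) * Y \<le> ((l + 2) choose 2) * r * X"
proof -
  define L R M where "L = real l" and "R = real r" and "M = real (m - 1)"
  have "2 * l * r^2 \<le> m - 1"
    using m by simp
  then have "real (2 * l * r^2) \<le> real (m - 1)"
    by (simp only: of_nat_le_iff)
  then have LRM: "2 * L * R^2 \<le> M"
    unfolding L_def R_def M_def by (simp only: of_nat_mult of_nat_power of_nat_numeral)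
  have "r \<le> l * r^2"
    using l by (simp add: power2_eq_square)
  then have "M > 0"
    using m lr unfolding M_def by simp
  have "real ((r - 1) * X) = real ((m - 1) * Y)"
    using XY by (simp only:)
  then have XY': "(R - 1) * real X = M * real Y"
    using lr unfolding R_def M_def by simp
  have "M * ((L + 1) * (R - L) * real X + (L + 3) * (L + 2) * (L + 1) / 6 * (R * (R - 1) / 2) * real Y)
      = (L + 1) * (R - L) * M * real X + (L + 3) * (L + 2) * (L + 1) / 6 * (R * (R - 1) / 2) * (M * real Y)"
    by (simp add: algebra_simps)
  also have "\<dots> = real X * ((12 * (L + 1) * (R - L) * M + (L + 3) * (L + 2) * (L + 1) * R * (R - 1)^2) / 12)"
    unfolding XY'[symmetric] by (simp add: power2_eq_square field_simps)
  also have "\<dots> \<le> real X * (6 * (L + 2) * (L + 1) * R * M / 12)"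
    using three_term_polynomial_ineq[OF _ _ LRM] l lr unfolding L_def R_def
    by (intro mult_left_mono) auto
  also have "\<dots> = M * ((L + 2) * (L + 1) / 2 * R * real X)"
    by (simp add: algebra_simps)
  finally have "(L + 1) * (R - L) * real X + (L + 3) * (L + 2) * (L + 1) / 6 * (R * (R - 1) / 2) * real Y
      \<le> (L + 2) * (L + 1) / 2 * R * real X"
    using \<open>M > 0\<close> by simp
  moreover have "real (r - l) = R - L"
    using lr unfolding R_def L_def by simp
  ultimately have "real ((l + 1) * (r - l) * X + ((l + 3) choose 3) * (r choose 2) * Y)
      \<le> real (((l + 2) choose 2) * r * X)"
    unfolding of_nat_add of_nat_mult real_choose_two real_choose_three L_def R_def
    by (simp add: algebra_simps)
  then show ?thesis
    by (simp only: of_nat_le_iff)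
qed

lemma cube_bound_three_term:
  fixes l r :: nat
  assumes "1 \<le> l"
  shows "2 * l * r^2 + 2 * l + 3 \<le> (l + r + 1)^3 + 1"
proof -
  have "(l + r + 1)^3 = l^3 + 3 * l^2 * (r + 1) + 3 * l * r^2 + 6 * l * r + 3 * l + (r + 1)^3"
    by (simp add: power3_eq_cube power2_eq_square algebra_simps)
  moreover have "1 \<le> (r + 1)^3"
    by simp
  ultimately show ?thesis
    using assms by linarith
qed

lemma three_term_binomial_bound:
  fixes l r m :: nat
  assumes l: "1 \<le> l" and lr: "l < r" and m: "2 * l * r^2 + 1 \<le> m"
  shows "(l + 1) * (m choose r) + ((l + 3) choose 3) * (r choose 2) * ((m - 2) choose (r - 2))
    \<le> (l + 1) * ((m - (r - l)) choose r) + ((l + 2) choose 2) * r * ((m - 1) choose (r - 1))"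
proof -
  define d X Y where "d = r - l" and "X = (m - 1) choose (r - 1)" and "Y = (m - 2) choose (r - 2)"
  have "r \<le> l * r^2"
    using l by (simp add: power2_eq_square)
  then have "m choose r \<le> ((m - d) choose r) + d * X"
    unfolding X_def d_def using lr m by (intro binomial_le_shift) auto
  from mult_le_mono2[OF this, of "l + 1"]
  have shift: "(l + 1) * (m choose r) \<le> (l + 1) * ((m - d) choose r) + (l + 1) * d * X"
    by (simp only: add_mult_distrib2 mult.assoc)
  have "(r - 1) * X = (m - 1) * ((m - 1 - 1) choose (r - 1 - 1))"
    unfolding X_def using l lr by (intro times_binomial_minus1_eq) simp
  moreover have "m - 1 - 1 = m - 2" "r - 1 - 1 = r - 2"
    by auto
  ultimately have "(r - 1) * X = (m - 1) * Y"
    by (simp only: Y_def)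
  then have "(l + 1) * d * X + ((l + 3) choose 3) * (r choose 2) * Y \<le> ((l + 2) choose 2) * r * X"
    unfolding d_def by (rule three_term_binomial_ineq[OF l lr m])
  with shift show ?thesis
    unfolding d_def X_def Y_def by linarith
qed

lemma intersection_eigen_summand_diagonal_next:
  "k = l + r + 1 \<Longrightarrow> intersection_eigen_summand n k l (l + 1) (l + 1) = (l + 1) * ((n - 2 * l - 2) choose r)"
  by (simp add: intersection_eigen_summand_def numeral_eq_Suc)

lemma intersection_eigen_summand_next_two:
  assumes kr: "k = l + r + 1" and r: "2 \<le> r"
  shows "intersection_eigen_summand n k l (l + 1) (l + 2) = ((l + 2) choose 2) * r * ((n - 2 * l - 2 - 1) choose (r - 1))"
    and "intersection_eigen_summand n k l (l + 1) (l + 3)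
      = ((l + 3) choose 3) * (r choose 2) * ((n - 2 * l - 2 - 2) choose (r - 2))"
proof -
  have "(l + 2) choose l = (l + 2) choose 2" "r choose (r - 1) = r"
    "(l + 3) choose l = (l + 3) choose 3" "r choose (r - 2) = r choose 2"
    using binomial_symmetric[of l "l + 2"] binomial_symmetric[of 1 r] binomial_symmetric[of l "l + 3"]
      binomial_symmetric[of 2 r] r by simp_all
  moreover have "k - (l + 2) = r - 1" "k - (l + 3) = r - 2" "k - (l + 1) = r"
    "n - (l + 2) - (l + 1) = n - 2 * l - 2 - 1" "n - (l + 3) - (l + 1) = n - 2 * l - 2 - 2"
    using kr r by auto
  ultimately show "intersection_eigen_summand n k l (l + 1) (l + 2)
      = ((l + 2) choose 2) * r * ((n - 2 * l - 2 - 1) choose (r - 1))"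
    and "intersection_eigen_summand n k l (l + 1) (l + 3)
      = ((l + 3) choose 3) * (r choose 2) * ((n - 2 * l - 2 - 2) choose (r - 2))"
    using kr r by (simp_all add: intersection_eigen_summand_def mult.assoc)
qed

lemma intersection_eigen_summand_three_term:
  assumes k: "2 \<le> k" and n: "k^3 + 1 \<le> n" and l: "1 \<le> l" "l + 1 \<le> k"
  shows "intersection_eigen_summand n k l (l + 1) (l + 1) + intersection_eigen_summand n k l (l + 1) (l + 3)
    \<le> (l + 1) * ((n - k - 1) choose (k - l - 1)) + intersection_eigen_summand n k l (l + 1) (l + 2)"
proof -
  obtain r where kr: "k = l + r + 1"
    using l by (metis add.commute add.left_commute le_Suc_ex Suc_eq_plus1)
  define m where "m = n - 2 * l - 2"
  have nm: "2 * l * r^2 + 2 * l + 3 \<le> n"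
    using cube_bound_three_term[OF l(1), of r] n kr by simp
  have k_minus: "k - l - 1 = r"
    using kr by simp
  note first = intersection_eigen_summand_diagonal_next[OF kr, of n, folded m_def]
  show ?thesis
  proof (cases "r \<le> l")
    case True
    then have "m choose r \<le> (n - k - 1) choose r"
      using kr by (intro binomial_right_mono) (simp add: m_def)
    then have "(l + 1) * (m choose r) \<le> (l + 1) * ((n - k - 1) choose r)"
      by (rule mult_le_mono2)
    moreover have "intersection_eigen_summand n k l (l + 1) (Suc (l + 2))
        \<le> intersection_eigen_summand n k l (l + 1) (l + 2)"
      using k n by (rule intersection_eigen_summand_antitone) simp_all
    then have "intersection_eigen_summand n k l (l + 1) (l + 3)
        \<le> intersection_eigen_summand n k l (l + 1) (l + 2)"
      by (simp add: numeral_eq_Suc)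
    ultimately show ?thesis
      unfolding first k_minus by linarith
  next
    case False
    then have "l < r" "2 \<le> r"
      using l by auto
    moreover have "2 * l * r^2 + 1 \<le> m" "n - k - 1 = m - (r - l)"
      using nm kr False by (auto simp: m_def)
    ultimately show ?thesis
      using three_term_binomial_bound[OF l(1)] intersection_eigen_summand_next_two[OF kr, of n]
      unfolding first k_minus m_def[symmetric] by simp
  qed
qed

definition intersection_eigen_tail :: "nat \<Rightarrow> nat \<Rightarrow> nat \<Rightarrow> nat \<Rightarrow> nat \<Rightarrow> real" where
  "intersection_eigen_tail n k l j p = (\<Sum>t\<in>{p..k}. (-1)^(t - p) * real (intersection_eigen_summand n k l j t))"

lemma intersection_eigen_tail_bounds:
  assumes "2 \<le> k" "k^3 + 1 \<le> n" "l \<le> p" "j \<le> p"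
  shows "0 \<le> intersection_eigen_tail n k l j p
    \<and> intersection_eigen_tail n k l j p \<le> real (intersection_eigen_summand n k l j p)"
  unfolding intersection_eigen_tail_def using assms intersection_eigen_summand_antitone
  by (intro alternating_sum_antitone_bounds) auto

lemma intersection_eigen_tail_rec:
  "intersection_eigen_tail n k l j p
    = real (intersection_eigen_summand n k l j p) - intersection_eigen_tail n k l j (Suc p)"
  unfolding intersection_eigen_tail_def
  by (rule alternating_sum_rec) (simp add: intersection_eigen_summand_def)

lemma intersection_eigenvalue_from:
  assumes "l < j" "j \<le> k"
  shows "intersection_eigenvalue n k l j = (-1)^(j - l) * intersection_eigen_tail n k l j j"
proof -
  have split: "{l..k} = {l..<j} \<union> {j..k}"
    using assms by auto
  have zero: "intersection_eigen_summand n k l j t = 0" if "t < j" for t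
  proof -
    have "k - j < k - t"
      using that assms(2) by linarith
    then show ?thesis
      by (simp add: intersection_eigen_summand_def)
  qed
  have sign: "(-1::real)^(t - l) = (-1)^(j - l) * (-1)^(t - j)" if "j \<le> t" for t
  proof -
    have "t - l = (j - l) + (t - j)"
      using that assms by simp
    then show ?thesis
      by (simp add: power_add)
  qed
  have "intersection_eigenvalue n k l j
      = (\<Sum>t\<in>{l..<j}. (-1)^(t - l) * real (intersection_eigen_summand n k l j t))
      + (\<Sum>t\<in>{j..k}. (-1)^(t - l) * real (intersection_eigen_summand n k l j t))"
    unfolding intersection_eigenvalue_def split by (rule sum.union_disjoint) auto
  also have "(\<Sum>t\<in>{l..<j}. (-1)^(t - l) * real (intersection_eigen_summand n k l j t)) = 0"
    by (intro sum.neutral) (simp add: zero)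
  also have "(\<Sum>t\<in>{j..k}. (-1)^(t - l) * real (intersection_eigen_summand n k l j t))
      = (-1)^(j - l) * (\<Sum>t\<in>{j..k}. (-1)^(t - j) * real (intersection_eigen_summand n k l j t))"
    unfolding sum_distrib_left
  proof (rule sum.cong[OF refl])
    fix t assume "t \<in> {j..k}"
    then have "j \<le> t"
      by simp
    then show "(-1)^(t - l) * real (intersection_eigen_summand n k l j t)
        = (-1)^(j - l) * ((-1)^(t - j) * real (intersection_eigen_summand n k l j t))"
      unfolding sign[OF \<open>j \<le> t\<close>] by (simp only: mult.assoc)
  qed
  finally show ?thesis
    unfolding intersection_eigen_tail_def by (simp only: add_0_left)
qed

lemma intersection_eigen_summand_next_le:
  assumes k: "2 \<le> k" and n: "k^3 + 1 \<le> n" and l: "1 \<le> l" "l + 1 \<le> k"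
  shows "intersection_eigen_summand n k l (l + 1) (l + 3) \<le> (l + 1) * ((n - k - 1) choose (k - l - 1))"
proof -
  have "intersection_eigen_summand n k l (l + 1) (Suc (l + 1)) \<le> intersection_eigen_summand n k l (l + 1) (l + 1)"
    using k n by (rule intersection_eigen_summand_antitone) simp_all
  then have "intersection_eigen_summand n k l (l + 1) (l + 2) \<le> intersection_eigen_summand n k l (l + 1) (l + 1)"
    by (simp add: numeral_eq_Suc)
  then show ?thesis
    using intersection_eigen_summand_three_term[OF k n l] by linarith
qed

lemma intersection_eigen_tail_next_le:
  assumes k: "2 \<le> k" and n: "k^3 + 1 \<le> n" and l: "1 \<le> l" "l + 1 \<le> k"
  shows "intersection_eigen_tail n k l (l + 1) (l + 1) \<le> real ((l + 1) * ((n - k - 1) choose (k - l - 1)))"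
proof -
  have "intersection_eigen_tail n k l (l + 1) (l + 1)
      = real (intersection_eigen_summand n k l (l + 1) (l + 1)) - real (intersection_eigen_summand n k l (l + 1) (l + 2))
        + intersection_eigen_tail n k l (l + 1) (l + 3)"
    using intersection_eigen_tail_rec[of n k l "l + 1" "l + 1"] intersection_eigen_tail_rec[of n k l "l + 1" "l + 2"]
    by (simp add: numeral_eq_Suc)
  also have "\<dots> \<le> real (intersection_eigen_summand n k l (l + 1) (l + 1))
      - real (intersection_eigen_summand n k l (l + 1) (l + 2)) + real (intersection_eigen_summand n k l (l + 1) (l + 3))"
    using intersection_eigen_tail_bounds[OF k n, of l "l + 3" "l + 1"] by simp
  also have "\<dots> \<le> real ((l + 1) * ((n - k - 1) choose (k - l - 1)))"
    using intersection_eigen_summand_three_term[OF k n l] by linarith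
  finally show ?thesis .
qed

lemma intersection_eigen_tail_far_le:
  assumes k: "2 \<le> k" and n: "k^3 + 1 \<le> n" and l: "1 \<le> l" "l + 1 \<le> k" and j: "l + 3 \<le> j" "j \<le> k"
  shows "intersection_eigen_tail n k l j j \<le> real ((l + 1) * ((n - k - 1) choose (k - l - 1)))"
proof -
  have "1 \<le> (k - (l + 1)) choose (k - j)"
    using j by (simp add: Suc_le_eq)
  moreover have "(n - j - j) choose (k - j) \<le> (n - j - (l + 1)) choose (k - j)"
    using j by (intro binomial_right_mono) simp
  ultimately have "(j choose l) * 1 * ((n - j - j) choose (k - j))
      \<le> (j choose l) * ((k - (l + 1)) choose (k - j)) * ((n - j - (l + 1)) choose (k - j))"
    by (intro mult_le_mono mult_le_mono2) auto
  then have "intersection_eigen_summand n k l j j \<le> intersection_eigen_summand n k l (l + 1) j"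
    using j by (simp add: intersection_eigen_summand_def)
  also have "\<dots> \<le> intersection_eigen_summand n k l (l + 1) (l + 3)"
  proof (rule lift_Suc_antimono_le_ivl[where N="{l + 1..}" and f="intersection_eigen_summand n k l (l + 1)"])
    fix t assume "t \<in> {l + 1..}"
    then show "intersection_eigen_summand n k l (l + 1) (Suc t) \<le> intersection_eigen_summand n k l (l + 1) t"
      using k n by (intro intersection_eigen_summand_antitone) auto
  qed (use j in auto)
  also have "\<dots> \<le> (l + 1) * ((n - k - 1) choose (k - l - 1))"
    by (rule intersection_eigen_summand_next_le[OF k n l])
  finally show ?thesis
    using intersection_eigen_tail_bounds[OF k n, of l j j] j by linarith
qed

lemma intersection_eigenvalue_lower_bound:
  assumes k: "2 \<le> k" and n: "k^3 + 1 \<le> n" and l: "1 \<le> l" "l \<le> k - 1" and j: "j \<le> k"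
  shows "0 \<le> real ((l + 1) * ((n - k - 1) choose (k - l - 1))) + intersection_eigenvalue n k l j"
proof (cases "j \<le> l")
  case True
  then show ?thesis
    using intersection_eigen_tail_bounds[OF k n, of l l j]
    by (simp add: intersection_eigenvalue_def intersection_eigen_tail_def)
next
  case False
  then have E: "intersection_eigenvalue n k l j = (-1)^(j - l) * intersection_eigen_tail n k l j j"
    using j by (intro intersection_eigenvalue_from) auto
  have tail: "0 \<le> intersection_eigen_tail n k l j j"
    using intersection_eigen_tail_bounds[OF k n, of l j j] False by simp
  show ?thesis
  proof (cases "even (j - l)")
    case True
    then show ?thesis
      using E tail by simp
  next
    case odd: False
    have "l + 1 \<le> k"
      using l k by simp
    have "j = l + 1 \<or> l + 3 \<le> j"
    proof (rule ccontr)
      assume "\<not> (j = l + 1 \<or> l + 3 \<le> j)"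
      then have "j \<noteq> l + 1" "j < l + 3"
        by auto
      with False have "j - l = 2"
        by linarith
      then show False
        using odd by simp
    qed
    then have "intersection_eigen_tail n k l j j \<le> real ((l + 1) * ((n - k - 1) choose (k - l - 1)))"
      using intersection_eigen_tail_next_le[OF k n l(1) \<open>l + 1 \<le> k\<close>]
        intersection_eigen_tail_far_le[OF k n l(1) \<open>l + 1 \<le> k\<close> _ j] by auto
    then show ?thesis
      using E odd by simp
  qed
qed

section \<open>The generalized Johnson graph \<open>G(n,k,{l})\<close>\<close>

lemma bij_betw_johnson_verts_intersection:
  assumes A: "A \<in> johnson_verts n k" and "l \<le> k"
  shows "bij_betw (\<lambda>B. (A \<inter> B, B - A)) {B\<in>johnson_verts n k. card (A \<inter> B) = l}
    ({S. S \<subseteq> A \<and> card S = l} \<times> {P. P \<subseteq> {1..n} - A \<and> card P = k - l})"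
    (is "bij_betw ?f ?X ?Y")
proof -
  note A_props = johnson_verts_memberD[OF A]
  have "inj_on ?f ?X"
  proof (rule inj_onI)
    fix B B' assume "?f B = ?f B'"
    then have "A \<inter> B = A \<inter> B'" "B - A = B' - A"
      by auto
    then show "B = B'"
      by blast
  qed
  moreover have "?f ` ?X \<subseteq> ?Y"
  proof (rule image_subsetI)
    fix B assume "B \<in> ?X"
    then have "B \<in> johnson_verts n k" "card (A \<inter> B) = l"
      by auto
    moreover from this have "card (B - A) = k - l"
      using johnson_verts_memberD[of B] by (simp add: card_Diff_subset_Int Int_commute)
    ultimately show "?f B \<in> ?Y"
      using johnson_verts_memberD(2)[of B] by blast
  qed
  moreover have "?Y \<subseteq> ?f ` ?X"
  proof (rule subsetI)
    fix y assume "y \<in> ?Y"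
    then obtain S P where y: "y = (S, P)" and S: "S \<subseteq> A" "card S = l"
      and P: "P \<subseteq> {1..n} - A" "card P = k - l"
      by blast
    have "finite S" "finite P" "S \<inter> P = {}"
      using finite_subset[OF S(1) A_props(1)] finite_subset[OF P(1)] S(1) P(1) by auto
    then have "card (S \<union> P) = k"
      using S(2) P(2) \<open>l \<le> k\<close> by (simp add: card_Un_disjoint)
    moreover have "S \<union> P \<subseteq> {1..n}" "A \<inter> (S \<union> P) = S" "S \<union> P - A = P"
      using S(1) P(1) A_props(2) by auto
    ultimately have mem: "S \<union> P \<in> ?X" and img: "?f (S \<union> P) = y"
      using S(2) y by (simp_all add: johnson_verts_def)
    show "y \<in> ?f ` ?X"
      by (rule image_eqI[where f="\<lambda>B. (A \<inter> B, B - A)", OF img[symmetric] mem])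
  qed
  ultimately show ?thesis
    unfolding bij_betw_def by (simp add: subset_antisym)
qed

lemma card_johnson_verts_intersection:
  assumes A: "A \<in> johnson_verts n k" and "l \<le> k"
  shows "card {B\<in>johnson_verts n k. card (A \<inter> B) = l} = (k choose l) * ((n - k) choose (k - l))"
proof -
  note A_props = johnson_verts_memberD[OF A]
  have "card {B\<in>johnson_verts n k. card (A \<inter> B) = l}
      = card ({S. S \<subseteq> A \<and> card S = l} \<times> {P. P \<subseteq> {1..n} - A \<and> card P = k - l})"
    using bij_betw_johnson_verts_intersection[OF assms] by (rule bij_betw_same_card)
  also have "\<dots> = (k choose l) * ((n - k) choose (k - l))"
    unfolding card_cartesian_product using n_subsets[OF A_props(1), of l]
      n_subsets[of "{1..n} - A" "k - l"] card_Diff_subset[OF A_props(1,2)] A_props(3) by simp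
  finally show ?thesis .
qed

lemma double_le_of_cube_le:
  fixes n k :: nat
  assumes "2 \<le> k" "k^3 + 1 \<le> n"
  shows "2 * k \<le> n"
proof -
  have "2 * 2 * k \<le> k * k * k"
    by (rule mult_le_mono1[OF mult_le_mono[OF assms(1) assms(1)]])
  then show ?thesis
    using assms(2) unfolding power3_eq_cube by linarith
qed

lemma lovasz_theta_johnson_ge_degree_ratio:
  fixes n k l :: nat
  assumes k: "2 \<le> k" and n: "k^3 + 1 \<le> n" and l: "1 \<le> l" "l \<le> k - 1"
  shows "1 + real ((k choose l) * ((n - k) choose (k - l))) / real ((l + 1) * ((n - k - 1) choose (k - l - 1)))
    \<le> lovasz_theta (johnson_verts n k) (gen_johnson_adj {l})"
proof -
  let ?V = "johnson_verts n k"
  have kn: "2 * k \<le> n"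
    using k n by (rule double_le_of_cube_le)
  have "0 < (n - k - 1) choose (k - l - 1)"
    using kn by (intro zero_less_binomial) simp
  then have "0 < (l + 1) * ((n - k - 1) choose (k - l - 1))"
    by simp
  then have lam: "0 < real ((l + 1) * ((n - k - 1) choose (k - l - 1)))"
    by (simp only: of_nat_0_less_iff)
  have "?V \<noteq> {}"
    using kn zero_less_binomial[of k n] card_johnson_verts[of n k] by force
  moreover have "\<forall>A\<in>?V. \<forall>B\<in>?V. of_bool (card (A \<inter> B) = l) = (of_bool (card (B \<inter> A) = l) :: real)"
    by (simp add: Int_commute)
  moreover have "l \<noteq> k"
    using l k by simp
  then have "\<forall>A\<in>?V. of_bool (card (A \<inter> A) = l) = (0::real)"
    by (simp add: johnson_verts_def)
  moreover have "\<forall>A\<in>?V. \<forall>B\<in>?V. gen_johnson_adj {l} A B \<longrightarrow> A \<noteq> B \<and> of_bool (card (A \<inter> B) = l) = (0::real)"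
    by (simp add: gen_johnson_adj_def)
  moreover have "\<forall>A\<in>?V. (\<Sum>B\<in>?V. of_bool (card (A \<inter> B) = l)) = real ((k choose l) * ((n - k) choose (k - l)))"
  proof
    fix A assume A: "A \<in> ?V"
    have "(\<Sum>B\<in>?V. of_bool (card (A \<inter> B) = l)) = (\<Sum>B\<in>?V. of_bool (card (A \<inter> B) = l) * (1::real))"
      by simp
    also have "\<dots> = real (card {B\<in>?V. card (A \<inter> B) = l})"
      by (simp only: sum_filter_of_bool[OF finite_johnson_verts, symmetric]) simp
    also have "\<dots> = real ((k choose l) * ((n - k) choose (k - l)))"
      using card_johnson_verts_intersection[OF A] l k by simp
    finally show "(\<Sum>B\<in>?V. of_bool (card (A \<inter> B) = l)) = real ((k choose l) * ((n - k) choose (k - l)))" .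
  qed
  moreover have "0 \<le> real ((l + 1) * ((n - k - 1) choose (k - l - 1))) * (\<Sum>A\<in>?V. x A ^ 2)
      + (\<Sum>A\<in>?V. \<Sum>B\<in>?V. x A * of_bool (card (A \<inter> B) = l) * x B)" for x
    using intersection_eigenvalue_lower_bound[OF k n l] by (intro johnson_intersection_psd[OF kn]) auto
  ultimately show ?thesis
    by (rule lovasz_theta_ge_shifted_regular[OF finite_johnson_verts _ lam])
qed

lemma johnson_degree_ratio:
  fixes n k l :: nat
  assumes "l < k" "2 * k \<le> n"
  shows "real ((k choose l) * ((n - k) choose (k - l))) / real ((l + 1) * ((n - k - 1) choose (k - l - 1)))
    = real (k choose (k - l)) / (real (k - l) * real (l + 1)) * (real n - real k)"
proof -
  define K D C where "K = real (k choose l)" and "D = real ((n - k) choose (k - l))"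
    and "C = real ((n - k - 1) choose (k - l - 1))"
  have "(k - l) * ((n - k) choose (k - l)) = (n - k) * ((n - k - 1) choose (k - l - 1))"
    using assms(1) by (intro times_binomial_minus1_eq) simp
  then have "real ((k - l) * ((n - k) choose (k - l))) = real ((n - k) * ((n - k - 1) choose (k - l - 1)))"
    by (simp only:)
  then have aD: "real (k - l) * D = (real n - real k) * C"
    using assms unfolding D_def C_def by (simp only: of_nat_mult of_nat_diff)
  have "0 < C"
    unfolding C_def using assms by simp
  have "0 < real (k - l)"
    using assms(1) by simp
  have "K * D / (real (l + 1) * C) = K * (real (k - l) * D) / (real (k - l) * real (l + 1) * C)"
    using \<open>0 < real (k - l)\<close> by simp
  also have "\<dots> = K * ((real n - real k) * C) / (real (k - l) * real (l + 1) * C)"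
    unfolding aD ..
  also have "\<dots> = K / (real (k - l) * real (l + 1)) * (real n - real k)"
    using \<open>0 < C\<close> by simp
  finally have "K * D / (real (l + 1) * C) = K / (real (k - l) * real (l + 1)) * (real n - real k)" .
  moreover have "k choose (k - l) = k choose l"
    using assms(1) by (intro binomial_symmetric[symmetric]) simp
  ultimately show ?thesis
    by (simp only: K_def D_def C_def of_nat_mult)
qed

definition johnson_block :: "nat \<Rightarrow> nat \<Rightarrow> nat set" where
  "johnson_block k i = {i * k + 1..i * k + k}"

lemma johnson_block_mem:
  assumes "i < n div k"
  shows "johnson_block k i \<in> johnson_verts n k"
proof -
  have "Suc i * k \<le> n div k * k"
    using assms by (intro mult_le_mono1) simp
  also have "\<dots> \<le> n"
    by simp
  finally show ?thesis
    by (auto simp: johnson_block_def johnson_verts_def)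
qed

lemma johnson_block_disjoint:
  assumes "i \<noteq> i'"
  shows "johnson_block k i \<inter> johnson_block k i' = {}"
proof (cases "i < i'")
  case True
  then have "Suc i * k \<le> i' * k"
    by (intro mult_le_mono1) simp
  then show ?thesis
    by (auto simp: johnson_block_def)
next
  case False
  then have "Suc i' * k \<le> i * k"
    using assms by (intro mult_le_mono1) simp
  then show ?thesis
    by (auto simp: johnson_block_def)
qed

lemma lovasz_theta_johnson_disjoint_ge:
  fixes n k :: nat
  assumes "1 \<le> k" "k \<le> n"
  shows "real (n div k) \<le> lovasz_theta (johnson_verts n k) (gen_johnson_adj {0})"
proof -
  let ?S = "johnson_block k ` {..<n div k}"
  have "johnson_block k i \<noteq> {}" for i
    using assms(1) by (simp add: johnson_block_def)
  then have "inj_on (johnson_block k) {..<n div k}"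
    using johnson_block_disjoint by (intro inj_onI) (metis Int_absorb)
  then have "card ?S = n div k"
    by (simp add: card_image)
  moreover have "?S \<subseteq> johnson_verts n k"
    using johnson_block_mem by auto
  moreover have "0 < n div k"
    using assms by (simp add: div_greater_zero_iff)
  then have "?S \<noteq> {}"
    by auto
  moreover have "\<not> gen_johnson_adj {0} (johnson_block k i) (johnson_block k i')" for i i'
    using johnson_block_disjoint[of i i' k] by (cases "i = i'") (auto simp: gen_johnson_adj_def)
  then have "\<forall>A\<in>?S. \<forall>B\<in>?S. \<not> gen_johnson_adj {0} A B"
    by auto
  ultimately show ?thesis
    using lovasz_theta_ge_card_independent[OF finite_johnson_verts] by metis
qed

theorem proposition3p3:
  fixes n k l :: nat
  assumes "k \<ge> 2" and "n \<ge> k ^ 3 + 1" and "l \<le> k - 1"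
  shows "lovasz_theta (johnson_verts n k) (gen_johnson_adj {l})
           \<ge> real (k choose (k - l)) / (real (k - l) * real (l + 1)) * (real n - real k)"
proof -
  have kn: "2 * k \<le> n"
    using assms(1,2) by (rule double_le_of_cube_le)
  show ?thesis
  proof (cases "l = 0")
    case True
    have "n < (n div k + 1) * k"
      using assms(1) dividend_less_div_times[of k n] by simp
    then have "real n < (real (n div k) + 1) * real k"
      by (metis of_nat_less_iff of_nat_mult of_nat_Suc Suc_eq_plus1 add.commute)
    then have "(real n - real k) / real k \<le> real (n div k)"
      using assms(1) by (simp add: field_simps)
    then show ?thesis
      using lovasz_theta_johnson_disjoint_ge[of k n] assms(1) kn True by simp
  next
    case False
    then show ?thesis
      using lovasz_theta_johnson_ge_degree_ratio[OF assms(1,2) _ assms(3)] johnson_degree_ratio[OF _ kn, of l]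
        assms(1,3) by simp
  qed
qed

end
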